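(* Let $(H,\prec)$ be an elementary POP-graph with exactly one internal vertex, and let $(G_1,\prec_1),(G_2,\prec_2)$ be POP-graphs. (1) If the compositions are defined and $(H,\prec)\circ(G_1,\prec_1)=(H,\prec)\circ(G_2,\prec_2)$, then $(G_1,\prec_1)=(G_2,\prec_2)$. (2) If the compositions are defined and $(G_1,\prec_1)\circ(H,\prec)=(G_2,\prec_2)\circ(H,\prec)$, then $(G_1,\prec_1)=(G_2,\prec_2)$.
   Context: A progressive graph is a finite directed acyclic graph (parallel edges allowed) in which every source and every sink has degree one; degree-one vertices are boundary vertices, the others internal. It is elementary if each connected component has at most one internal vertex. An input edge is an edge whose initial vertex is a boundary vertex; an output edge one whose terminal vertex is a boundary vertex. For edges write $e\to e'$ if $e\neq e'$ and there is a directed path whose first edge is $e$ and last edge is $e'$. A planar order on $G$ is a linear order $\prec$ on $E(G)$ such that (P1) $e_1\to e_2$ implies $e_1\prec e_2$; (P2) if $e_1\prec e_2\prec e_3$ and $e_1\to e_3$ then $e_1\to e_2$ or $e_2\to e_3$. A POP-graph is a progressive graph with a planar order. Equality of POP-graphs means isomorphism: bijections of vertices and edges preserving incidence, direction and the planar orders. Composition: let $(G_1,\prec_1)$, $(G_2,\prec_2)$ be POP-graphs, $G_1$ with output edges $o_1\prec_1\cdots\prec_1 o_n$ and $G_2$ with input edges $i_1\prec_2\cdots\prec_2 i_n$ (composition is defined when these numbers agree). $G_2\circ G_1$ is obtained from $G_1\sqcup G_2$ by deleting the sinks of $G_1$, the sources of $G_2$ and the edges $o_k,i_k$, and adding for each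 $k$ a new edge $\overline{e_k}$ from the initial vertex of $o_k$ to the terminal vertex of $i_k$. With $Q_1=\{e\in E(G_1): e\prec_1 o_1\}$, $Q_k=\{e: o_{k-1}\prec_1 e\prec_1 o_k\}$, $P_k=\{e\in E(G_2): i_k\prec_2 e\prec_2 i_{k+1}\}$ ($k<n$), $P_n=\{e: i_n\prec_2 e\}$, the order $\prec_2\circ\prec_1$ lists $Q_1,\{\overline{e_1}\},P_1,\dots,Q_n,\{\overline{e_n}\},P_n$ consecutively, each $Q_k$ ordered by $\prec_1$, each $P_k$ by $\prec_2$; $(G_2,\prec_2)\circ(G_1,\prec_1):=(G_2\circ G_1,\prec_2\circ\prec_1)$. *)

theory Defs
  imports Main
begin

record ('v,'e) pgraph =
  pg_verts :: "'v set"
  pg_edges :: "'e set"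
  pg_tail  :: "'e \<Rightarrow> 'v"
  pg_head  :: "'e \<Rightarrow> 'v"
  pg_ord   :: "('e \<times> 'e) set"

definition indeg :: "('v,'e) pgraph \<Rightarrow> 'v \<Rightarrow> nat" where
  "indeg G v = card {e \<in> pg_edges G. pg_head G e = v}"

definition outdeg :: "('v,'e) pgraph \<Rightarrow> 'v \<Rightarrow> nat" where
  "outdeg G v = card {e \<in> pg_edges G. pg_tail G e = v}"

definition deg :: "('v,'e) pgraph \<Rightarrow> 'v \<Rightarrow> nat" where
  "deg G v = indeg G v + outdeg G v"

definition vrel :: "('v,'e) pgraph \<Rightarrow> ('v \<times> 'v) set" where
  "vrel G = {(pg_tail G e, pg_head G e) | e. e \<in> pg_edges G}"

definition is_source :: "('v,'e) pgraph \<Rightarrow> 'v \<Rightarrow> bool" where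
  "is_source G v \<longleftrightarrow> v \<in> pg_verts G \<and> indeg G v = 0"

definition is_sink :: "('v,'e) pgraph \<Rightarrow> 'v \<Rightarrow> bool" where
  "is_sink G v \<longleftrightarrow> v \<in> pg_verts G \<and> outdeg G v = 0"

definition boundary :: "('v,'e) pgraph \<Rightarrow> 'v \<Rightarrow> bool" where
  "boundary G v \<longleftrightarrow> v \<in> pg_verts G \<and> deg G v = 1"

definition internal :: "('v,'e) pgraph \<Rightarrow> 'v \<Rightarrow> bool" where
  "internal G v \<longleftrightarrow> v \<in> pg_verts G \<and> deg G v \<noteq> 1"

definition progressive :: "('v,'e) pgraph \<Rightarrow> bool" where
  "progressive G \<longleftrightarrow>
     finite (pg_verts G) \<and> finite (pg_edges G) \<and>
     (\<forall>e \<in> pg_edges G. pg_tail G e \<in> pg_verts G \<and> pg_head G e \<in> pg_verts G) \<and>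
     acyclic (vrel G) \<and>
     (\<forall>v. (is_source G v \<or> is_sink G v) \<longrightarrow> deg G v = 1)"

definition elementary :: "('v,'e) pgraph \<Rightarrow> bool" where
  "elementary G \<longleftrightarrow>
     (\<forall>u v. internal G u \<and> internal G v \<and> (u, v) \<in> (vrel G \<union> (vrel G)\<inverse>)\<^sup>* \<longrightarrow> u = v)"

definition input_edges :: "('v,'e) pgraph \<Rightarrow> 'e set" where
  "input_edges G = {e \<in> pg_edges G. boundary G (pg_tail G e)}"

definition output_edges :: "('v,'e) pgraph \<Rightarrow> 'e set" where
  "output_edges G = {e \<in> pg_edges G. boundary G (pg_head G e)}"

definition esucc :: "('v,'e) pgraph \<Rightarrow> ('e \<times> 'e) set" where
  "esucc G = {(e, e'). e \<in> pg_edges G \<and> e' \<in> pg_edges G \<and> pg_head G e = pg_tail G e'}"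

definition reach :: "('v,'e) pgraph \<Rightarrow> 'e \<Rightarrow> 'e \<Rightarrow> bool" where
  "reach G e e' \<longleftrightarrow> e \<noteq> e' \<and> (e, e') \<in> (esucc G)\<^sup>*"

definition planar_order :: "('v,'e) pgraph \<Rightarrow> bool" where
  "planar_order G \<longleftrightarrow>
     pg_ord G \<subseteq> pg_edges G \<times> pg_edges G \<and>
     trans (pg_ord G) \<and> irrefl (pg_ord G) \<and> total_on (pg_edges G) (pg_ord G) \<and>
     (\<forall>e1 e2. reach G e1 e2 \<longrightarrow> (e1, e2) \<in> pg_ord G) \<and>
     (\<forall>e1 e2 e3. (e1, e2) \<in> pg_ord G \<and> (e2, e3) \<in> pg_ord G \<and> reach G e1 e3
        \<longrightarrow> reach G e1 e2 \<or> reach G e2 e3)"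

definition pop :: "('v,'e) pgraph \<Rightarrow> bool" where
  "pop G \<longleftrightarrow> progressive G \<and> planar_order G"

text \<open>Equality of POP-graphs = isomorphism preserving incidence, direction and order.\<close>
definition pop_iso :: "('v,'e) pgraph \<Rightarrow> ('w,'f) pgraph \<Rightarrow> bool" where
  "pop_iso G G' \<longleftrightarrow> (\<exists>f g.
     bij_betw f (pg_verts G) (pg_verts G') \<and> bij_betw g (pg_edges G) (pg_edges G') \<and>
     (\<forall>e \<in> pg_edges G. pg_tail G' (g e) = f (pg_tail G e) \<and> pg_head G' (g e) = f (pg_head G e)) \<and>
     (\<forall>e1 \<in> pg_edges G. \<forall>e2 \<in> pg_edges G. (e1, e2) \<in> pg_ord G \<longleftrightarrow> (g e1, g e2) \<in> pg_ord G'))"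

definition nbefore :: "('v,'e) pgraph \<Rightarrow> 'e set \<Rightarrow> 'e \<Rightarrow> nat" where
  "nbefore G S e = card {x \<in> S. (x, e) \<in> pg_ord G}"

definition comp_defined :: "('v2,'e2) pgraph \<Rightarrow> ('v1,'e1) pgraph \<Rightarrow> bool" where
  "comp_defined G2 G1 \<longleftrightarrow> card (output_edges G1) = card (input_edges G2)"

definition match_in :: "('v2,'e2) pgraph \<Rightarrow> ('v1,'e1) pgraph \<Rightarrow> 'e1 \<Rightarrow> 'e2" where
  "match_in G2 G1 oe = (THE i. i \<in> input_edges G2 \<and>
       nbefore G2 (input_edges G2) i = nbefore G1 (output_edges G1) oe)"

text \<open>Vertices and edges of G1 are tagged Inl, those of G2 Inr;
  the new edge joining o_k and i_k is represented by Inl o_k.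
  Order key: Q_k (k-1 outputs before) \<mapsto> (k-1,0); e_k-bar \<mapsto> (k-1,1);
  P_k (k inputs at or before, i.e. k inputs strictly before) \<mapsto> (k-1,2);
  ties are broken by the original orders.\<close>
definition comp_key :: "('v2,'e2) pgraph \<Rightarrow> ('v1,'e1) pgraph \<Rightarrow> 'e1 + 'e2 \<Rightarrow> nat \<times> nat" where
  "comp_key G2 G1 x = (case x of
      Inl e \<Rightarrow> (nbefore G1 (output_edges G1) e, if e \<in> output_edges G1 then 1 else 0)
    | Inr e \<Rightarrow> (nbefore G2 (input_edges G2) e - 1, 2))"

definition comp_side_ord :: "('v2,'e2) pgraph \<Rightarrow> ('v1,'e1) pgraph \<Rightarrow> 'e1 + 'e2 \<Rightarrow> 'e1 + 'e2 \<Rightarrow> bool" where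
  "comp_side_ord G2 G1 x y = (case (x, y) of
      (Inl a, Inl b) \<Rightarrow> (a, b) \<in> pg_ord G1
    | (Inr a, Inr b) \<Rightarrow> (a, b) \<in> pg_ord G2
    | _ \<Rightarrow> False)"

definition comp :: "('v2,'e2) pgraph \<Rightarrow> ('v1,'e1) pgraph \<Rightarrow> ('v1 + 'v2, 'e1 + 'e2) pgraph" where
  "comp G2 G1 = (let E = Inl ` pg_edges G1 \<union> Inr ` (pg_edges G2 - input_edges G2) in
    \<lparr> pg_verts = Inl ` {v \<in> pg_verts G1. \<not> is_sink G1 v} \<union> Inr ` {v \<in> pg_verts G2. \<not> is_source G2 v},
      pg_edges = E,
      pg_tail = (\<lambda>x. case x of Inl e \<Rightarrow> Inl (pg_tail G1 e) | Inr e \<Rightarrow> Inr (pg_tail G2 e)),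
      pg_head = (\<lambda>x. case x of
                   Inl e \<Rightarrow> (if e \<in> output_edges G1 then Inr (pg_head G2 (match_in G2 G1 e))
                             else Inl (pg_head G1 e))
                 | Inr e \<Rightarrow> Inr (pg_head G2 e)),
      pg_ord = {(x, y). x \<in> E \<and> y \<in> E \<and>
                 (fst (comp_key G2 G1 x) < fst (comp_key G2 G1 y) \<or>
                  (fst (comp_key G2 G1 x) = fst (comp_key G2 G1 y) \<and>
                   snd (comp_key G2 G1 x) < snd (comp_key G2 G1 y)) \<or>
                  (comp_key G2 G1 x = comp_key G2 G1 y \<and> comp_side_ord G2 G1 x y))} \<rparr>)"

end

theory Submission
  imports Defs "HOL-Library.Product_Lexorder"
begin

text \<open>An isomorphism between two composites with the same single-vertex graph H must fix every edge
  coming from H, because these edges are recognisable and ranked intrinsically. In H \<circ> G they are,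
  together with the wires through H, the edges ending in a sink, ranked in the planar order like the
  output edges of H. In G \<circ> H the input edges of H are the edges starting at a source, and the
  edges leaving the internal vertex h are the edges leaving its image, again ranked as in H. Once the
  part coming from H is fixed, the isomorphism restricts to the part coming from G, and the boundary
  vertices of G deleted by the composition are recovered from its output (resp. input) edges.\<close>

lemma pop_finite_edges: "pop G \<Longrightarrow> finite (pg_edges G)"
  by (simp add: pop_def progressive_def)

lemma pop_tail_in_verts: "pop G \<Longrightarrow> e \<in> pg_edges G \<Longrightarrow> pg_tail G e \<in> pg_verts G"
  and pop_head_in_verts: "pop G \<Longrightarrow> e \<in> pg_edges G \<Longrightarrow> pg_head G e \<in> pg_verts G"
  by (simp_all add: pop_def progressive_def)

lemma pop_tail_neq_head:
  assumes "pop G" "e \<in> pg_edges G"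
  shows "pg_tail G e \<noteq> pg_head G e"
proof
  assume "pg_tail G e = pg_head G e"
  then have "(pg_tail G e, pg_tail G e) \<in> (vrel G)\<^sup>+"
    using assms(2) unfolding vrel_def by force
  with assms(1) show False by (simp add: pop_def progressive_def acyclic_def)
qed

lemma pop_source_or_sink_boundary: "pop G \<Longrightarrow> is_source G v \<or> is_sink G v \<Longrightarrow> boundary G v"
  by (auto simp: pop_def progressive_def boundary_def is_source_def is_sink_def)

lemma indeg_eq_0_iff:
  "finite (pg_edges G) \<Longrightarrow> indeg G v = 0 \<longleftrightarrow> (\<forall>e\<in>pg_edges G. pg_head G e \<noteq> v)"
  by (auto simp: indeg_def)

lemma outdeg_eq_0_iff:
  "finite (pg_edges G) \<Longrightarrow> outdeg G v = 0 \<longleftrightarrow> (\<forall>e\<in>pg_edges G. pg_tail G e \<noteq> v)"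
  by (auto simp: outdeg_def)

definition has_in_edge :: "('v, 'e) pgraph \<Rightarrow> 'v \<Rightarrow> bool" where
  "has_in_edge G v \<longleftrightarrow> (\<exists>e\<in>pg_edges G. pg_head G e = v)"

definition has_out_edge :: "('v, 'e) pgraph \<Rightarrow> 'v \<Rightarrow> bool" where
  "has_out_edge G v \<longleftrightarrow> (\<exists>e\<in>pg_edges G. pg_tail G e = v)"

lemma pop_is_source_iff: "pop G \<Longrightarrow> is_source G v \<longleftrightarrow> v \<in> pg_verts G \<and> \<not> has_in_edge G v"
  by (simp add: is_source_def has_in_edge_def indeg_eq_0_iff pop_finite_edges)

lemma pop_is_sink_iff: "pop G \<Longrightarrow> is_sink G v \<longleftrightarrow> v \<in> pg_verts G \<and> \<not> has_out_edge G v"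
  by (simp add: is_sink_def has_out_edge_def outdeg_eq_0_iff pop_finite_edges)

lemma boundary_no_in_and_out:
  assumes "pop G" "boundary G v" "a \<in> pg_edges G" "pg_head G a = v" "b \<in> pg_edges G" "pg_tail G b = v"
  shows False
proof -
  have "indeg G v \<noteq> 0" "outdeg G v \<noteq> 0"
    using assms by (auto simp: indeg_eq_0_iff outdeg_eq_0_iff pop_finite_edges)
  with assms(2) show False by (simp add: boundary_def deg_def)
qed

lemma input_edge_no_in:
  "pop G \<Longrightarrow> i \<in> input_edges G \<Longrightarrow> a \<in> pg_edges G \<Longrightarrow> pg_head G a \<noteq> pg_tail G i"
  using boundary_no_in_and_out by (fastforce simp: input_edges_def)

lemma output_edge_no_out:
  "pop G \<Longrightarrow> oe \<in> output_edges G \<Longrightarrow> b \<in> pg_edges G \<Longrightarrow> pg_tail G b \<noteq> pg_head G oe"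
  using boundary_no_in_and_out by (fastforce simp: output_edges_def)

lemma noninput_has_in:
  assumes "pop G" "e \<in> pg_edges G" "e \<notin> input_edges G"
  obtains a where "a \<in> pg_edges G" "pg_head G a = pg_tail G e"
  using assms pop_source_or_sink_boundary[of G "pg_tail G e"]
  by (auto simp: pop_is_source_iff has_in_edge_def pop_tail_in_verts input_edges_def)

lemma nonoutput_has_out:
  assumes "pop G" "e \<in> pg_edges G" "e \<notin> output_edges G"
  obtains b where "b \<in> pg_edges G" "pg_tail G b = pg_head G e"
  using assms pop_source_or_sink_boundary[of G "pg_head G e"]
  by (auto simp: pop_is_sink_iff has_out_edge_def pop_head_in_verts output_edges_def)

lemma input_edges_subset: "input_edges G \<subseteq> pg_edges G"
  and output_edges_subset: "output_edges G \<subseteq> pg_edges G"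
  by (auto simp: input_edges_def output_edges_def)

lemma pop_finite_input_edges: "pop G \<Longrightarrow> finite (input_edges G)"
  and pop_finite_output_edges: "pop G \<Longrightarrow> finite (output_edges G)"
  using pop_finite_edges input_edges_subset output_edges_subset by (metis finite_subset)+

lemma pop_bij_betw_output_edges_sinks:
  assumes "pop G"
  shows "bij_betw (pg_head G) (output_edges G) {v \<in> pg_verts G. is_sink G v}"
proof (rule bij_betw_imageI)
  have sink_indeg: "indeg G v = 1" if "is_sink G v" for v
    using that pop_source_or_sink_boundary[OF assms, of v] by (simp add: boundary_def deg_def is_sink_def)
  show "inj_on (pg_head G) (output_edges G)"
  proof (rule inj_onI)
    fix x y assume xy: "x \<in> output_edges G" "y \<in> output_edges G" "pg_head G x = pg_head G y"
    have "is_sink G (pg_head G x)"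
      using xy(1) output_edge_no_out[OF assms xy(1)]
      by (auto simp: pop_is_sink_iff[OF assms] has_out_edge_def pop_head_in_verts[OF assms] output_edges_def)
    then obtain z where "{e \<in> pg_edges G. pg_head G e = pg_head G x} = {z}"
      using sink_indeg by (metis card_1_singletonE indeg_def)
    moreover have "x \<in> pg_edges G" "y \<in> pg_edges G" using xy(1,2) by (auto simp: output_edges_def)
    ultimately show "x = y" using xy(3) by (metis (mono_tags, lifting) mem_Collect_eq singletonD)
  qed
  show "pg_head G ` output_edges G = {v \<in> pg_verts G. is_sink G v}"
  proof (intro equalityI subsetI)
    fix v assume "v \<in> pg_head G ` output_edges G"
    then show "v \<in> {v \<in> pg_verts G. is_sink G v}"
      using output_edge_no_out[OF assms]
      by (auto simp: pop_is_sink_iff[OF assms] has_out_edge_def pop_head_in_verts[OF assms] output_edges_def)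
  next
    fix v assume v: "v \<in> {v \<in> pg_verts G. is_sink G v}"
    then have "indeg G v \<noteq> 0" using sink_indeg by simp
    then obtain e where "e \<in> pg_edges G" "pg_head G e = v"
      by (auto simp: indeg_eq_0_iff pop_finite_edges[OF assms])
    moreover have "boundary G v" using v pop_source_or_sink_boundary[OF assms] by blast
    ultimately show "v \<in> pg_head G ` output_edges G" by (auto simp: output_edges_def)
  qed
qed

lemma pop_bij_betw_input_edges_sources:
  assumes "pop G"
  shows "bij_betw (pg_tail G) (input_edges G) {v \<in> pg_verts G. is_source G v}"
proof (rule bij_betw_imageI)
  have source_outdeg: "outdeg G v = 1" if "is_source G v" for v
    using that pop_source_or_sink_boundary[OF assms, of v] by (simp add: boundary_def deg_def is_source_def)
  show "inj_on (pg_tail G) (input_edges G)"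
  proof (rule inj_onI)
    fix x y assume xy: "x \<in> input_edges G" "y \<in> input_edges G" "pg_tail G x = pg_tail G y"
    have "is_source G (pg_tail G x)"
      using xy(1) input_edge_no_in[OF assms xy(1)]
      by (auto simp: pop_is_source_iff[OF assms] has_in_edge_def pop_tail_in_verts[OF assms] input_edges_def)
    then obtain z where "{e \<in> pg_edges G. pg_tail G e = pg_tail G x} = {z}"
      using source_outdeg by (metis card_1_singletonE outdeg_def)
    moreover have "x \<in> pg_edges G" "y \<in> pg_edges G" using xy(1,2) by (auto simp: input_edges_def)
    ultimately show "x = y" using xy(3) by (metis (mono_tags, lifting) mem_Collect_eq singletonD)
  qed
  show "pg_tail G ` input_edges G = {v \<in> pg_verts G. is_source G v}"
  proof (intro equalityI subsetI)
    fix v assume "v \<in> pg_tail G ` input_edges G"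
    then show "v \<in> {v \<in> pg_verts G. is_source G v}"
      using input_edge_no_in[OF assms]
      by (auto simp: pop_is_source_iff[OF assms] has_in_edge_def pop_tail_in_verts[OF assms] input_edges_def)
  next
    fix v assume v: "v \<in> {v \<in> pg_verts G. is_source G v}"
    then have "outdeg G v \<noteq> 0" using source_outdeg by simp
    then obtain e where "e \<in> pg_edges G" "pg_tail G e = v"
      by (auto simp: outdeg_eq_0_iff pop_finite_edges[OF assms])
    moreover have "boundary G v" using v pop_source_or_sink_boundary[OF assms] by blast
    ultimately show "v \<in> pg_tail G ` input_edges G" by (auto simp: input_edges_def)
  qed
qed

lemma pop_strict_linear_order: "pop G \<Longrightarrow> strict_linear_order_on (pg_edges G) (pg_ord G)"
  by (simp add: pop_def planar_order_def strict_linear_order_on_def)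

lemma pop_consecutive_ord:
  assumes "pop G" "a \<in> pg_edges G" "b \<in> pg_edges G" "pg_head G a = pg_tail G b"
  shows "(a, b) \<in> pg_ord G"
proof -
  have "reach G a b"
    using assms pop_tail_neq_head[OF assms(1,3)] by (auto simp: reach_def esucc_def)
  with assms(1) show ?thesis by (simp add: pop_def planar_order_def)
qed

section \<open>Ranks in a strict linear order\<close>

definition rank :: "('a \<times> 'a) set \<Rightarrow> 'a set \<Rightarrow> 'a \<Rightarrow> nat" where
  "rank r S x = card {y \<in> S. (y, x) \<in> r}"

lemma nbefore_eq_rank: "nbefore G S = rank (pg_ord G) S"
  by (simp add: fun_eq_iff nbefore_def rank_def)

lemma rank_mono:
  assumes "finite S" "trans r" "(a, b) \<in> r"
  shows "rank r S a \<le> rank r S b"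
  unfolding rank_def using assms by (intro card_mono) (auto dest: transD)

lemma rank_strict_mono:
  assumes "finite S" "trans r" "irrefl r" "(a, b) \<in> r" "a \<in> S"
  shows "rank r S a < rank r S b"
  unfolding rank_def using assms by (intro psubset_card_mono) (auto dest: transD simp: irrefl_def)

lemma rank_less_iff:
  assumes r: "strict_linear_order_on E r" and S: "finite S" "S \<subseteq> E" and ab: "a \<in> S" "b \<in> E"
  shows "rank r S a < rank r S b \<longleftrightarrow> (a, b) \<in> r"
proof
  assume less: "rank r S a < rank r S b"
  show "(a, b) \<in> r"
  proof (rule ccontr)
    assume "(a, b) \<notin> r"
    moreover have "a \<noteq> b" using less by auto
    ultimately have "(b, a) \<in> r"
      using r S ab unfolding strict_linear_order_on_def total_on_def by blast
    then have "rank r S b \<le> rank r S a"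
      using rank_mono S r by (auto simp: strict_linear_order_on_def)
    with less show False by simp
  qed
qed (use rank_strict_mono r S ab in \<open>auto simp: strict_linear_order_on_def\<close>)

lemma strict_linear_order_on_not_less_iff:
  assumes "strict_linear_order_on E r" "a \<in> E" "b \<in> E" "a \<noteq> b"
  shows "(b, a) \<in> r \<longleftrightarrow> (a, b) \<notin> r"
  using assms unfolding strict_linear_order_on_def total_on_def by (metis irrefl_def transD)

lemma inj_on_rank:
  assumes "strict_linear_order_on E r" "finite S" "S \<subseteq> E"
  shows "inj_on (rank r S) S"
proof (rule inj_onI)
  fix a b assume ab: "a \<in> S" "b \<in> S" "rank r S a = rank r S b"
  then have "(a, b) \<notin> r" "(b, a) \<notin> r"
    using rank_less_iff[OF assms] assms(3) by (metis less_irrefl subsetD)+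
  with ab(1,2) assms(1,3) show "a = b"
    unfolding strict_linear_order_on_def total_on_def by blast
qed

lemma bij_betw_rank:
  assumes "strict_linear_order_on E r" "finite S" "S \<subseteq> E"
  shows "bij_betw (rank r S) S {..<card S}"
proof -
  have inj: "inj_on (rank r S) S" by (rule inj_on_rank[OF assms])
  have "rank r S x < card S" if "x \<in> S" for x
    unfolding rank_def using assms that
    by (intro psubset_card_mono) (auto simp: strict_linear_order_on_def irrefl_def)
  then have "rank r S ` S \<subseteq> {..<card S}" by auto
  moreover have "card (rank r S ` S) = card {..<card S}" using card_image[OF inj] by simp
  ultimately have "rank r S ` S = {..<card S}" by (simp add: card_subset_eq)
  with inj show ?thesis by (simp add: bij_betw_def)
qed

lemma rank_image:
  assumes "inj_on g X" "S \<subseteq> X" "x \<in> X" "\<And>y. y \<in> S \<Longrightarrow> (g y, g x) \<in> r' \<longleftrightarrow> (y, x) \<in> r"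
  shows "rank r' (g ` S) (g x) = rank r S x"
proof -
  have "{y' \<in> g ` S. (y', g x) \<in> r'} = g ` {y \<in> S. (y, x) \<in> r}" using assms(4) by auto
  moreover have "inj_on g {y \<in> S. (y, x) \<in> r}" using assms(1) by (rule inj_on_subset) (use assms(2) in auto)
  ultimately show ?thesis by (simp add: rank_def card_image)
qed

lemma pop_rank_less_iff:
  "pop G \<Longrightarrow> S \<subseteq> pg_edges G \<Longrightarrow> a \<in> S \<Longrightarrow> b \<in> pg_edges G \<Longrightarrow>
    rank (pg_ord G) S a < rank (pg_ord G) S b \<longleftrightarrow> (a, b) \<in> pg_ord G"
  by (rule rank_less_iff[OF pop_strict_linear_order _ _ _ _]) (auto intro: finite_subset pop_finite_edges)

lemma pop_inj_on_rank: "pop G \<Longrightarrow> S \<subseteq> pg_edges G \<Longrightarrow> inj_on (rank (pg_ord G) S) S"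
  by (rule inj_on_rank[OF pop_strict_linear_order]) (auto intro: finite_subset pop_finite_edges)

text \<open>The least edge has no predecessor, so it is an input edge.\<close>

lemma pop_rank_inputs_pos:
  assumes G: "pop G" and b: "b \<in> pg_edges G" "b \<notin> input_edges G"
  shows "rank (pg_ord G) (input_edges G) b \<ge> 1"
proof -
  have lin: "strict_linear_order_on (pg_edges G) (pg_ord G)" by (rule pop_strict_linear_order[OF G])
  have fin: "finite (pg_edges G)" by (rule pop_finite_edges[OF G])
  then have "0 \<in> rank (pg_ord G) (pg_edges G) ` pg_edges G"
    using bij_betw_rank[OF lin fin subset_refl] b(1) card_gt_0_iff
    by (metis bij_betw_imp_surj_on emptyE lessThan_iff)
  then obtain m where m: "m \<in> pg_edges G" "\<And>y. y \<in> pg_edges G \<Longrightarrow> (y, m) \<notin> pg_ord G"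
    using fin by (auto simp: rank_def)
  have "m \<in> input_edges G"
    using m noninput_has_in[OF G m(1)] pop_consecutive_ord[OF G] by metis
  moreover have "(m, b) \<in> pg_ord G"
    using m b lin \<open>m \<in> input_edges G\<close> unfolding strict_linear_order_on_def total_on_def by metis
  ultimately have "rank (pg_ord G) (input_edges G) m < rank (pg_ord G) (input_edges G) b"
    using G by (simp add: pop_rank_less_iff input_edges_subset b(1))
  then show ?thesis by simp
qed

section \<open>Composition\<close>

lemma lex_refinement_iff:
  fixes k :: "'a \<Rightarrow> 'b::linorder"
  assumes r: "strict_linear_order_on X r" and ab: "a \<in> X" "b \<in> X"
    and mono: "\<And>x y. x \<in> X \<Longrightarrow> y \<in> X \<Longrightarrow> (x, y) \<in> r \<Longrightarrow> k x \<le> k y"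
  shows "(k a < k b \<or> k a = k b \<and> (a, b) \<in> r) \<longleftrightarrow> (a, b) \<in> r"
proof -
  have "(b, a) \<in> r" if "(a, b) \<notin> r" "a \<noteq> b"
    using that r ab unfolding strict_linear_order_on_def total_on_def by blast
  then show ?thesis
    using mono[OF ab] mono[OF ab(2,1)] r by (force simp: strict_linear_order_on_def irrefl_def)
qed

lemma comp_edges: "pg_edges (comp B A) = Inl ` pg_edges A \<union> Inr ` (pg_edges B - input_edges B)"
  and comp_verts: "pg_verts (comp B A) =
    Inl ` {v \<in> pg_verts A. \<not> is_sink A v} \<union> Inr ` {v \<in> pg_verts B. \<not> is_source B v}"
  and comp_tail_Inl: "pg_tail (comp B A) (Inl e) = Inl (pg_tail A e)"
  and comp_tail_Inr: "pg_tail (comp B A) (Inr e') = Inr (pg_tail B e')"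
  and comp_head_Inl: "pg_head (comp B A) (Inl e) =
    (if e \<in> output_edges A then Inr (pg_head B (match_in B A e)) else Inl (pg_head A e))"
  and comp_head_Inr: "pg_head (comp B A) (Inr e') = Inr (pg_head B e')"
  by (simp_all add: comp_def Let_def)

lemma comp_ord_iff: "(x, y) \<in> pg_ord (comp B A) \<longleftrightarrow>
    x \<in> pg_edges (comp B A) \<and> y \<in> pg_edges (comp B A) \<and>
    (comp_key B A x < comp_key B A y \<or> comp_key B A x = comp_key B A y \<and> comp_side_ord B A x y)"
  by (auto simp: comp_def Let_def less_prod_def)

lemma comp_key_Inl: "comp_key B A (Inl e) =
    (rank (pg_ord A) (output_edges A) e, if e \<in> output_edges A then 1 else 0)"
  and comp_key_Inr: "comp_key B A (Inr e') = (rank (pg_ord B) (input_edges B) e' - 1, 2)"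
  by (simp_all add: comp_key_def nbefore_eq_rank)

lemma comp_side_ord_simps [simp]:
  "comp_side_ord B A (Inl a) (Inl b) \<longleftrightarrow> (a, b) \<in> pg_ord A"
  "comp_side_ord B A (Inr a') (Inr b') \<longleftrightarrow> (a', b') \<in> pg_ord B"
  "\<not> comp_side_ord B A (Inl a) (Inr b')"
  "\<not> comp_side_ord B A (Inr b') (Inl a)"
  by (simp_all add: comp_side_ord_def)

locale composable =
  fixes B :: "('vb, 'eb) pgraph" and A :: "('va, 'ea) pgraph"
  assumes pop_A: "pop A" and pop_B: "pop B"
    and card_eq: "card (output_edges A) = card (input_edges B)"
begin

lemma match_in:
  assumes oe: "oe \<in> output_edges A"
  shows "match_in B A oe \<in> input_edges B"
    and "rank (pg_ord B) (input_edges B) (match_in B A oe) = rank (pg_ord A) (output_edges A) oe"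
proof -
  let ?k = "rank (pg_ord A) (output_edges A) oe" and ?rB = "rank (pg_ord B) (input_edges B)"
  have fin: "finite (input_edges B)" "finite (output_edges A)"
    using pop_finite_input_edges[OF pop_B] pop_finite_output_edges[OF pop_A] .
  have "?k < card (input_edges B)"
    using bij_betw_apply[OF bij_betw_rank[OF pop_strict_linear_order[OF pop_A] fin(2) output_edges_subset] oe]
    by (simp add: card_eq)
  then obtain i where i: "i \<in> input_edges B" "?rB i = ?k"
    using bij_betw_rank[OF pop_strict_linear_order[OF pop_B] fin(1) input_edges_subset]
    by (metis bij_betw_iff_bijections lessThan_iff)
  have "match_in B A oe = i"
    unfolding match_in_def nbefore_eq_rank
    using i pop_inj_on_rank[OF pop_B input_edges_subset]
    by (intro the_equality) (auto simp: inj_on_def)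
  with i show "match_in B A oe \<in> input_edges B" "?rB (match_in B A oe) = ?k" by simp_all
qed

lemma match_in_ord_iff:
  assumes "oe \<in> output_edges A" "oe' \<in> output_edges A"
  shows "(match_in B A oe, match_in B A oe') \<in> pg_ord B \<longleftrightarrow> (oe, oe') \<in> pg_ord A"
proof -
  have m': "match_in B A oe' \<in> pg_edges B"
    using match_in(1)[OF assms(2)] input_edges_subset[of B] by blast
  have oe': "oe' \<in> pg_edges A" using assms(2) output_edges_subset[of A] by blast
  have "(match_in B A oe, match_in B A oe') \<in> pg_ord B \<longleftrightarrow>
      rank (pg_ord B) (input_edges B) (match_in B A oe) < rank (pg_ord B) (input_edges B) (match_in B A oe')"
    using pop_rank_less_iff[OF pop_B input_edges_subset match_in(1)[OF assms(1)] m'] by (rule sym)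
  also have "\<dots> \<longleftrightarrow> rank (pg_ord A) (output_edges A) oe < rank (pg_ord A) (output_edges A) oe'"
    by (simp only: match_in(2)[OF assms(1)] match_in(2)[OF assms(2)])
  also have "\<dots> \<longleftrightarrow> (oe, oe') \<in> pg_ord A"
    using pop_rank_less_iff[OF pop_A output_edges_subset assms(1) oe'] .
  finally show ?thesis .
qed

lemma bij_betw_match_in: "bij_betw (match_in B A) (output_edges A) (input_edges B)"
proof -
  have inj: "inj_on (match_in B A) (output_edges A)"
  proof (rule inj_onI)
    fix x y assume xy: "x \<in> output_edges A" "y \<in> output_edges A" "match_in B A x = match_in B A y"
    then have "rank (pg_ord A) (output_edges A) x = rank (pg_ord A) (output_edges A) y"
      using match_in(2) by metis
    with xy(1,2) show "x = y" using inj_onD[OF pop_inj_on_rank[OF pop_A output_edges_subset]] by blast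
  qed
  moreover have "match_in B A ` output_edges A \<subseteq> input_edges B" using match_in(1) by blast
  ultimately show ?thesis
    using card_image[OF inj] card_eq pop_finite_input_edges[OF pop_B]
    by (simp add: bij_betw_def card_subset_eq)
qed

lemma match_in_edge: "oe \<in> output_edges A \<Longrightarrow> match_in B A oe \<in> pg_edges B"
  using match_in(1) input_edges_subset[of B] by blast

lemma inv_match_in:
  assumes "i \<in> input_edges B"
  shows "inv_into (output_edges A) (match_in B A) i \<in> output_edges A"
    and "match_in B A (inv_into (output_edges A) (match_in B A) i) = i"
  using assms bij_betw_inv_into_right[OF bij_betw_match_in]
    bij_betw_apply[OF bij_betw_inv_into[OF bij_betw_match_in]] by blast+

lemma comp_ord_Inl_Inl:
  assumes "a \<in> pg_edges A" "b \<in> pg_edges A"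
  shows "(Inl a, Inl b) \<in> pg_ord (comp B A) \<longleftrightarrow> (a, b) \<in> pg_ord A"
proof -
  let ?k = "\<lambda>x. comp_key B A (Inl x)"
  have "?k x \<le> ?k y" if "(x, y) \<in> pg_ord A" for x y
    using rank_mono[OF _ _ that] rank_strict_mono[OF _ _ _ that]
      pop_finite_output_edges[OF pop_A] pop_strict_linear_order[OF pop_A]
    by (auto simp: comp_key_Inl less_eq_prod_def strict_linear_order_on_def)
  then show ?thesis
    using lex_refinement_iff[OF pop_strict_linear_order[OF pop_A] assms, of ?k] assms
    by (simp add: comp_ord_iff comp_edges)
qed

lemma comp_ord_Inr_Inr:
  assumes "a \<in> pg_edges B - input_edges B" "b \<in> pg_edges B - input_edges B"
  shows "(Inr a, Inr b) \<in> pg_ord (comp B A) \<longleftrightarrow> (a, b) \<in> pg_ord B"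
proof -
  let ?X = "pg_edges B - input_edges B" and ?k = "\<lambda>x. comp_key B A (Inr x)"
  have lin: "strict_linear_order_on ?X (pg_ord B)"
    using pop_strict_linear_order[OF pop_B] by (auto simp: strict_linear_order_on_def total_on_def)
  have "?k x \<le> ?k y" if "(x, y) \<in> pg_ord B" for x y
    using rank_mono[OF pop_finite_input_edges[OF pop_B] _ that] pop_strict_linear_order[OF pop_B]
    by (auto simp: comp_key_Inr less_eq_prod_def strict_linear_order_on_def diff_le_mono)
  then show ?thesis
    using lex_refinement_iff[OF lin assms, of ?k] assms by (simp add: comp_ord_iff comp_edges)
qed

lemma comp_ord_Inl_Inr:
  assumes oe: "oe \<in> output_edges A" and b: "b \<in> pg_edges B" "b \<notin> input_edges B"
  shows "(Inl oe, Inr b) \<in> pg_ord (comp B A) \<longleftrightarrow> (match_in B A oe, b) \<in> pg_ord B"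
    and "(Inr b, Inl oe) \<in> pg_ord (comp B A) \<longleftrightarrow> (b, match_in B A oe) \<in> pg_ord B"
proof -
  \<comment> \<open>so that the truncated subtraction in comp_key of Inr b is harmless\<close>
  have pos: "rank (pg_ord B) (input_edges B) b \<ge> 1" by (rule pop_rank_inputs_pos[OF pop_B b])
  have inK: "Inl oe \<in> pg_edges (comp B A)" "Inr b \<in> pg_edges (comp B A)"
    using oe b output_edges_subset[of A] by (auto simp: comp_edges)
  have less: "rank (pg_ord A) (output_edges A) oe < rank (pg_ord B) (input_edges B) b
      \<longleftrightarrow> (match_in B A oe, b) \<in> pg_ord B"
    using pop_rank_less_iff[OF pop_B input_edges_subset match_in(1)[OF oe] b(1)] match_in(2)[OF oe]
    by simp
  show "(Inl oe, Inr b) \<in> pg_ord (comp B A) \<longleftrightarrow> (match_in B A oe, b) \<in> pg_ord B"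
    using inK oe pos less by (auto simp: comp_ord_iff comp_key_Inl comp_key_Inr less_prod_def)
  have "match_in B A oe \<noteq> b" using match_in(1)[OF oe] b(2) by metis
  moreover have "match_in B A oe \<in> pg_edges B" using match_in(1)[OF oe] input_edges_subset[of B] ..
  ultimately have "(b, match_in B A oe) \<in> pg_ord B \<longleftrightarrow> (match_in B A oe, b) \<notin> pg_ord B"
    using strict_linear_order_on_not_less_iff[OF pop_strict_linear_order[OF pop_B] _ b(1)] by simp
  then show "(Inr b, Inl oe) \<in> pg_ord (comp B A) \<longleftrightarrow> (b, match_in B A oe) \<in> pg_ord B"
    using inK oe pos less by (auto simp: comp_ord_iff comp_key_Inl comp_key_Inr less_prod_def)
qed

lemma rank_comp_Inl:
  assumes "S \<subseteq> pg_edges A" "x \<in> pg_edges A"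
  shows "rank (pg_ord (comp B A)) (Inl ` S) (Inl x) = rank (pg_ord A) S x"
  using assms by (intro rank_image[of Inl "pg_edges A"]) (auto simp: comp_ord_Inl_Inl)

lemma comp_tail_in_verts:
  assumes "x \<in> pg_edges (comp B A)"
  shows "pg_tail (comp B A) x \<in> pg_verts (comp B A)"
proof (cases x)
  case (Inl e)
  with assms have e: "e \<in> pg_edges A" by (auto simp: comp_edges)
  then have "\<not> is_sink A (pg_tail A e)" by (auto simp: pop_is_sink_iff[OF pop_A] has_out_edge_def)
  with e show ?thesis using Inl pop_tail_in_verts[OF pop_A e] by (simp add: comp_verts comp_tail_Inl)
next
  case (Inr e)
  with assms have e: "e \<in> pg_edges B" "e \<notin> input_edges B" by (auto simp: comp_edges)
  then have "\<not> is_source B (pg_tail B e)"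
    using pop_source_or_sink_boundary[OF pop_B, of "pg_tail B e"] by (auto simp: input_edges_def)
  then show ?thesis using Inr pop_tail_in_verts[OF pop_B e(1)] by (simp add: comp_verts comp_tail_Inr)
qed

lemma comp_head_in_verts:
  assumes "x \<in> pg_edges (comp B A)"
  shows "pg_head (comp B A) x \<in> pg_verts (comp B A)"
proof -
  have not_source: "\<not> is_source B (pg_head B e)" if "e \<in> pg_edges B" for e
    using that by (auto simp: pop_is_source_iff[OF pop_B] has_in_edge_def)
  show ?thesis
  proof (cases x)
    case (Inl e)
    with assms have e: "e \<in> pg_edges A" by (auto simp: comp_edges)
    show ?thesis
    proof (cases "e \<in> output_edges A")
      case True
      then have "match_in B A e \<in> pg_edges B" using match_in(1) input_edges_subset[of B] by blast
      then show ?thesis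
        using Inl True pop_head_in_verts[OF pop_B] not_source by (simp add: comp_verts comp_head_Inl)
    next
      case False
      then have "\<not> is_sink A (pg_head A e)"
        using e pop_source_or_sink_boundary[OF pop_A, of "pg_head A e"] by (auto simp: output_edges_def)
      then show ?thesis
        using Inl False pop_head_in_verts[OF pop_A e] by (simp add: comp_verts comp_head_Inl)
    qed
  next
    case (Inr e)
    with assms have "e \<in> pg_edges B" by (auto simp: comp_edges)
    then show ?thesis
      using Inr pop_head_in_verts[OF pop_B] not_source by (simp add: comp_verts comp_head_Inr)
  qed
qed

end

section \<open>Isomorphisms\<close>

lemma bij_betw_Inl_part:
  assumes f: "bij_betw f (Inl ` A \<union> Inr ` C) (Inl ` A' \<union> Inr ` C')"
    and isl: "\<And>x. x \<in> Inl ` A \<union> Inr ` C \<Longrightarrow> isl (f x) \<longleftrightarrow> isl x"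
  shows "bij_betw (projl \<circ> f \<circ> Inl) A A'"
proof (rule bij_betw_imageI)
  have isl_f: "isl (f (Inl a))" if "a \<in> A" for a
    using isl[of "Inl a"] that by simp
  show "inj_on (projl \<circ> f \<circ> Inl) A"
  proof (rule inj_onI)
    fix a b assume ab: "a \<in> A" "b \<in> A" "(projl \<circ> f \<circ> Inl) a = (projl \<circ> f \<circ> Inl) b"
    then have "f (Inl a) = f (Inl b)"
      using isl_f[OF ab(1)] isl_f[OF ab(2)] by (metis comp_apply sum.collapse(1))
    with ab(1,2) show "a = b" using inj_onD[OF bij_betw_imp_inj_on[OF f]] by blast
  qed
  show "(projl \<circ> f \<circ> Inl) ` A = A'"
  proof (intro equalityI subsetI)
    fix a' assume "a' \<in> (projl \<circ> f \<circ> Inl) ` A"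
    then obtain a where a: "a \<in> A" "a' = projl (f (Inl a))" by auto
    then have "f (Inl a) = Inl a'" using isl_f[OF a(1)] by simp
    moreover have "f (Inl a) \<in> Inl ` A' \<union> Inr ` C'" using bij_betw_apply[OF f] a(1) by blast
    ultimately show "a' \<in> A'" by auto
  next
    fix a' assume "a' \<in> A'"
    then have "Inl a' \<in> f ` (Inl ` A \<union> Inr ` C)" using bij_betw_imp_surj_on[OF f] by blast
    then obtain x where x: "x \<in> Inl ` A \<union> Inr ` C" "f x = Inl a'" by (metis imageE)
    then obtain a where "x = Inl a" "a \<in> A" using isl[OF x(1)] by auto
    with x(2) have "a' = (projl \<circ> f \<circ> Inl) a" by simp
    with \<open>a \<in> A\<close> show "a' \<in> (projl \<circ> f \<circ> Inl) ` A" by blast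
  qed
qed

lemma bij_betw_Inr_part:
  assumes f: "bij_betw f (Inl ` A \<union> Inr ` C) (Inl ` A' \<union> Inr ` C')"
    and isl: "\<And>x. x \<in> Inl ` A \<union> Inr ` C \<Longrightarrow> isl (f x) \<longleftrightarrow> isl x"
  shows "bij_betw (projr \<circ> f \<circ> Inr) C C'"
proof (rule bij_betw_imageI)
  have not_isl_f: "\<not> isl (f (Inr c))" if "c \<in> C" for c
    using isl[of "Inr c"] that by simp
  show "inj_on (projr \<circ> f \<circ> Inr) C"
  proof (rule inj_onI)
    fix c d assume cd: "c \<in> C" "d \<in> C" "(projr \<circ> f \<circ> Inr) c = (projr \<circ> f \<circ> Inr) d"
    then have "f (Inr c) = f (Inr d)"
      using not_isl_f[OF cd(1)] not_isl_f[OF cd(2)] by (metis comp_apply sum.collapse(2))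
    with cd(1,2) show "c = d" using inj_onD[OF bij_betw_imp_inj_on[OF f]] by blast
  qed
  show "(projr \<circ> f \<circ> Inr) ` C = C'"
  proof (intro equalityI subsetI)
    fix c' assume "c' \<in> (projr \<circ> f \<circ> Inr) ` C"
    then obtain c where c: "c \<in> C" "c' = projr (f (Inr c))" by auto
    then have "f (Inr c) = Inr c'" using not_isl_f[OF c(1)] by simp
    moreover have "f (Inr c) \<in> Inl ` A' \<union> Inr ` C'" using bij_betw_apply[OF f] c(1) by blast
    ultimately show "c' \<in> C'" by auto
  next
    fix c' assume "c' \<in> C'"
    then have "Inr c' \<in> f ` (Inl ` A \<union> Inr ` C)" using bij_betw_imp_surj_on[OF f] by blast
    then obtain x where x: "x \<in> Inl ` A \<union> Inr ` C" "f x = Inr c'" by (metis imageE)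
    then obtain c where "x = Inr c" "c \<in> C" using isl[OF x(1)] by auto
    with x(2) have "c' = (projr \<circ> f \<circ> Inr) c" by simp
    with \<open>c \<in> C\<close> show "c' \<in> (projr \<circ> f \<circ> Inr) ` C" by blast
  qed
qed

lemma image_eq_if_mem_iff:
  assumes "g ` X = Y" "P \<subseteq> X" "P' \<subseteq> Y" "\<And>x. x \<in> X \<Longrightarrow> g x \<in> P' \<longleftrightarrow> x \<in> P"
  shows "g ` P = P'"
proof (intro equalityI subsetI)
  fix y assume "y \<in> P'"
  then obtain x where "x \<in> X" "y = g x" using assms(1,3) by blast
  with assms(4) \<open>y \<in> P'\<close> show "y \<in> g ` P" by blast
qed (use assms in blast)

definition sink_edges :: "('v, 'e) pgraph \<Rightarrow> 'e set" where
  "sink_edges G = {x \<in> pg_edges G. \<not> has_out_edge G (pg_head G x)}"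

definition source_edges :: "('v, 'e) pgraph \<Rightarrow> 'e set" where
  "source_edges G = {x \<in> pg_edges G. \<not> has_in_edge G (pg_tail G x)}"

locale graph_iso =
  fixes K1 :: "('v1, 'e1) pgraph" and K2 :: "('v2, 'e2) pgraph"
    and f :: "'v1 \<Rightarrow> 'v2" and g :: "'e1 \<Rightarrow> 'e2"
  assumes bij_verts: "bij_betw f (pg_verts K1) (pg_verts K2)"
    and bij_edges: "bij_betw g (pg_edges K1) (pg_edges K2)"
    and tail: "\<And>e. e \<in> pg_edges K1 \<Longrightarrow> pg_tail K2 (g e) = f (pg_tail K1 e)"
    and head: "\<And>e. e \<in> pg_edges K1 \<Longrightarrow> pg_head K2 (g e) = f (pg_head K1 e)"
    and ord_iff: "\<And>a b. a \<in> pg_edges K1 \<Longrightarrow> b \<in> pg_edges K1 \<Longrightarrow>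
      (g a, g b) \<in> pg_ord K2 \<longleftrightarrow> (a, b) \<in> pg_ord K1"
    and tail_in_verts: "\<And>e. e \<in> pg_edges K1 \<Longrightarrow> pg_tail K1 e \<in> pg_verts K1"
    and head_in_verts: "\<And>e. e \<in> pg_edges K1 \<Longrightarrow> pg_head K1 e \<in> pg_verts K1"
begin

lemma inj_on_verts: "inj_on f (pg_verts K1)"
  and inj_on_edges: "inj_on g (pg_edges K1)"
  and image_edges: "g ` pg_edges K1 = pg_edges K2"
  using bij_verts bij_edges by (simp_all add: bij_betw_def)

lemma image_out_edges:
  assumes "v \<in> pg_verts K1"
  shows "g ` {e \<in> pg_edges K1. pg_tail K1 e = v} = {e \<in> pg_edges K2. pg_tail K2 e = f v}"
proof -
  have "pg_tail K2 (g e) = f v \<longleftrightarrow> pg_tail K1 e = v" if "e \<in> pg_edges K1" for e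
    using that assms by (simp add: tail inj_on_eq_iff[OF inj_on_verts tail_in_verts])
  then show ?thesis using bij_betw_apply[OF bij_edges] by (intro image_eq_if_mem_iff[OF image_edges]) auto
qed

lemma image_in_edges:
  assumes "v \<in> pg_verts K1"
  shows "g ` {e \<in> pg_edges K1. pg_head K1 e = v} = {e \<in> pg_edges K2. pg_head K2 e = f v}"
proof -
  have "pg_head K2 (g e) = f v \<longleftrightarrow> pg_head K1 e = v" if "e \<in> pg_edges K1" for e
    using that assms by (simp add: head inj_on_eq_iff[OF inj_on_verts head_in_verts])
  then show ?thesis using bij_betw_apply[OF bij_edges] by (intro image_eq_if_mem_iff[OF image_edges]) auto
qed

lemma has_out_edge_iff: "v \<in> pg_verts K1 \<Longrightarrow> has_out_edge K2 (f v) \<longleftrightarrow> has_out_edge K1 v"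
  using image_out_edges unfolding has_out_edge_def by blast

lemma has_in_edge_iff: "v \<in> pg_verts K1 \<Longrightarrow> has_in_edge K2 (f v) \<longleftrightarrow> has_in_edge K1 v"
  using image_in_edges unfolding has_in_edge_def by blast

lemma image_sink_edges: "g ` sink_edges K1 = sink_edges K2"
proof -
  have "g x \<in> sink_edges K2 \<longleftrightarrow> x \<in> sink_edges K1" if "x \<in> pg_edges K1" for x
    using that has_out_edge_iff[OF head_in_verts[OF that]] bij_betw_apply[OF bij_edges]
    by (auto simp: sink_edges_def head)
  then show ?thesis by (intro image_eq_if_mem_iff[OF image_edges]) (auto simp: sink_edges_def)
qed

lemma image_source_edges: "g ` source_edges K1 = source_edges K2"
proof -
  have "g x \<in> source_edges K2 \<longleftrightarrow> x \<in> source_edges K1" if "x \<in> pg_edges K1" for x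
    using that has_in_edge_iff[OF tail_in_verts[OF that]] bij_betw_apply[OF bij_edges]
    by (auto simp: source_edges_def tail)
  then show ?thesis by (intro image_eq_if_mem_iff[OF image_edges]) (auto simp: source_edges_def)
qed

lemma rank_image_edges:
  assumes "S \<subseteq> pg_edges K1" "x \<in> pg_edges K1"
  shows "rank (pg_ord K2) (g ` S) (g x) = rank (pg_ord K1) S x"
  using assms by (intro rank_image[OF inj_on_edges]) (auto simp: ord_iff)

end

lemma pop_iso_imp_graph_iso:
  assumes "pop_iso K1 K2"
    and "\<And>e. e \<in> pg_edges K1 \<Longrightarrow> pg_tail K1 e \<in> pg_verts K1"
    and "\<And>e. e \<in> pg_edges K1 \<Longrightarrow> pg_head K1 e \<in> pg_verts K1"
  obtains f g where "graph_iso K1 K2 f g"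
proof -
  from assms(1) obtain f g where "bij_betw f (pg_verts K1) (pg_verts K2)"
    "bij_betw g (pg_edges K1) (pg_edges K2)"
    "\<forall>e\<in>pg_edges K1. pg_tail K2 (g e) = f (pg_tail K1 e) \<and> pg_head K2 (g e) = f (pg_head K1 e)"
    "\<forall>a\<in>pg_edges K1. \<forall>b\<in>pg_edges K1. (a, b) \<in> pg_ord K1 \<longleftrightarrow> (g a, g b) \<in> pg_ord K2"
    unfolding pop_iso_def by blast
  then have "graph_iso K1 K2 f g" using assms(2,3) by unfold_locales auto
  then show thesis by (rule that)
qed

text \<open>A sink has exactly one incoming edge, an output edge, so a vertex map defined away from the
  sinks extends uniquely along the output edges.\<close>

lemma pop_iso_from_nonsink_map:
  assumes G1: "pop G1" and G2: "pop G2"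
    and ge: "bij_betw ge (pg_edges G1) (pg_edges G2)"
    and outputs: "\<And>e. e \<in> pg_edges G1 \<Longrightarrow> ge e \<in> output_edges G2 \<longleftrightarrow> e \<in> output_edges G1"
    and fv: "bij_betw fv {v \<in> pg_verts G1. \<not> is_sink G1 v} {v \<in> pg_verts G2. \<not> is_sink G2 v}"
    and tail: "\<And>e. e \<in> pg_edges G1 \<Longrightarrow> pg_tail G2 (ge e) = fv (pg_tail G1 e)"
    and head: "\<And>e. e \<in> pg_edges G1 \<Longrightarrow> e \<notin> output_edges G1 \<Longrightarrow> pg_head G2 (ge e) = fv (pg_head G1 e)"
    and ord: "\<And>a b. a \<in> pg_edges G1 \<Longrightarrow> b \<in> pg_edges G1 \<Longrightarrow>
      (ge a, ge b) \<in> pg_ord G2 \<longleftrightarrow> (a, b) \<in> pg_ord G1"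
  shows "pop_iso G1 G2"
proof -
  let ?N1 = "{v \<in> pg_verts G1. \<not> is_sink G1 v}" and ?N2 = "{v \<in> pg_verts G2. \<not> is_sink G2 v}"
  let ?S1 = "{v \<in> pg_verts G1. is_sink G1 v}" and ?S2 = "{v \<in> pg_verts G2. is_sink G2 v}"
  define fs where "fs = pg_head G2 \<circ> ge \<circ> inv_into (output_edges G1) (pg_head G1)"
  define fv' where "fv' v = (if v \<in> ?N1 then fv v else fs v)" for v
  have heads1: "bij_betw (pg_head G1) (output_edges G1) ?S1"
    by (rule pop_bij_betw_output_edges_sinks[OF G1])
  have "ge ` output_edges G1 = output_edges G2"
    by (rule image_eq_if_mem_iff[OF bij_betw_imp_surj_on[OF ge] output_edges_subset output_edges_subset outputs])
  then have "bij_betw ge (output_edges G1) (output_edges G2)"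
    using bij_betw_subset[OF ge output_edges_subset] by simp
  then have "bij_betw (ge \<circ> inv_into (output_edges G1) (pg_head G1)) ?S1 (output_edges G2)"
    by (rule bij_betw_trans[OF bij_betw_inv_into[OF heads1]])
  then have "bij_betw fs ?S1 ?S2"
    unfolding fs_def using bij_betw_trans[OF _ pop_bij_betw_output_edges_sinks[OF G2]] by (simp add: comp_assoc)
  then have "bij_betw fv' (?N1 \<union> ?S1) (?N2 \<union> ?S2)"
    unfolding fv'_def using fv by (intro bij_betw_disjoint_Un) auto
  moreover have "?N1 \<union> ?S1 = pg_verts G1" "?N2 \<union> ?S2 = pg_verts G2" by blast+
  ultimately have bij: "bij_betw fv' (pg_verts G1) (pg_verts G2)" by simp
  have "pg_head G2 (ge e) = fv' (pg_head G1 e)" if e: "e \<in> pg_edges G1" for e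
  proof (cases "e \<in> output_edges G1")
    case True
    then have "pg_head G1 e \<in> ?S1" using bij_betw_apply[OF heads1] by blast
    then show ?thesis
      using True bij_betw_inv_into_left[OF heads1] by (simp add: fv'_def fs_def)
  next
    case False
    then have "pg_head G1 e \<in> ?N1"
      using e pop_head_in_verts[OF G1 e] pop_source_or_sink_boundary[OF G1, of "pg_head G1 e"]
      by (auto simp: output_edges_def)
    with False e show ?thesis by (simp add: fv'_def head)
  qed
  moreover have "pg_tail G2 (ge e) = fv' (pg_tail G1 e)" if e: "e \<in> pg_edges G1" for e
    using e pop_tail_in_verts[OF G1 e] by (auto simp: fv'_def tail pop_is_sink_iff[OF G1] has_out_edge_def)
  ultimately show ?thesis
    unfolding pop_iso_def using bij ge ord by blast
qed

lemma pop_iso_from_nonsource_map: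
  assumes G1: "pop G1" and G2: "pop G2"
    and ge: "bij_betw ge (pg_edges G1) (pg_edges G2)"
    and inputs: "\<And>e. e \<in> pg_edges G1 \<Longrightarrow> ge e \<in> input_edges G2 \<longleftrightarrow> e \<in> input_edges G1"
    and fv: "bij_betw fv {v \<in> pg_verts G1. \<not> is_source G1 v} {v \<in> pg_verts G2. \<not> is_source G2 v}"
    and head: "\<And>e. e \<in> pg_edges G1 \<Longrightarrow> pg_head G2 (ge e) = fv (pg_head G1 e)"
    and tail: "\<And>e. e \<in> pg_edges G1 \<Longrightarrow> e \<notin> input_edges G1 \<Longrightarrow> pg_tail G2 (ge e) = fv (pg_tail G1 e)"
    and ord: "\<And>a b. a \<in> pg_edges G1 \<Longrightarrow> b \<in> pg_edges G1 \<Longrightarrow>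
      (ge a, ge b) \<in> pg_ord G2 \<longleftrightarrow> (a, b) \<in> pg_ord G1"
  shows "pop_iso G1 G2"
proof -
  let ?N1 = "{v \<in> pg_verts G1. \<not> is_source G1 v}" and ?N2 = "{v \<in> pg_verts G2. \<not> is_source G2 v}"
  let ?S1 = "{v \<in> pg_verts G1. is_source G1 v}" and ?S2 = "{v \<in> pg_verts G2. is_source G2 v}"
  define fs where "fs = pg_tail G2 \<circ> ge \<circ> inv_into (input_edges G1) (pg_tail G1)"
  define fv' where "fv' v = (if v \<in> ?N1 then fv v else fs v)" for v
  have tails1: "bij_betw (pg_tail G1) (input_edges G1) ?S1"
    by (rule pop_bij_betw_input_edges_sources[OF G1])
  have "ge ` input_edges G1 = input_edges G2"
    by (rule image_eq_if_mem_iff[OF bij_betw_imp_surj_on[OF ge] input_edges_subset input_edges_subset inputs])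
  then have "bij_betw ge (input_edges G1) (input_edges G2)"
    using bij_betw_subset[OF ge input_edges_subset] by simp
  then have "bij_betw (ge \<circ> inv_into (input_edges G1) (pg_tail G1)) ?S1 (input_edges G2)"
    by (rule bij_betw_trans[OF bij_betw_inv_into[OF tails1]])
  then have "bij_betw fs ?S1 ?S2"
    unfolding fs_def using bij_betw_trans[OF _ pop_bij_betw_input_edges_sources[OF G2]] by (simp add: comp_assoc)
  then have "bij_betw fv' (?N1 \<union> ?S1) (?N2 \<union> ?S2)"
    unfolding fv'_def using fv by (intro bij_betw_disjoint_Un) auto
  moreover have "?N1 \<union> ?S1 = pg_verts G1" "?N2 \<union> ?S2 = pg_verts G2" by blast+
  ultimately have bij: "bij_betw fv' (pg_verts G1) (pg_verts G2)" by simp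
  have "pg_tail G2 (ge e) = fv' (pg_tail G1 e)" if e: "e \<in> pg_edges G1" for e
  proof (cases "e \<in> input_edges G1")
    case True
    then have "pg_tail G1 e \<in> ?S1" using bij_betw_apply[OF tails1] by blast
    then show ?thesis
      using True bij_betw_inv_into_left[OF tails1] by (simp add: fv'_def fs_def)
  next
    case False
    then have "pg_tail G1 e \<in> ?N1"
      using e pop_tail_in_verts[OF G1 e] pop_source_or_sink_boundary[OF G1, of "pg_tail G1 e"]
      by (auto simp: input_edges_def)
    with False e show ?thesis by (simp add: fv'_def tail)
  qed
  moreover have "pg_head G2 (ge e) = fv' (pg_head G1 e)" if e: "e \<in> pg_edges G1" for e
    using e pop_head_in_verts[OF G1 e] by (auto simp: fv'_def head pop_is_source_iff[OF G1] has_in_edge_def)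
  ultimately show ?thesis
    unfolding pop_iso_def using bij ge ord by blast
qed

locale single_internal =
  fixes H :: "('vh, 'eh) pgraph" and h :: 'vh
  assumes pop_H: "pop H" and h_vert: "h \<in> pg_verts H" and h_not_boundary: "\<not> boundary H h"
    and boundary_unless_h: "\<And>v. v \<in> pg_verts H \<Longrightarrow> v \<noteq> h \<Longrightarrow> boundary H v"
begin

lemma input_iff_tail_neq: "e \<in> pg_edges H \<Longrightarrow> e \<in> input_edges H \<longleftrightarrow> pg_tail H e \<noteq> h"
  using boundary_unless_h h_not_boundary pop_tail_in_verts[OF pop_H] by (auto simp: input_edges_def)

lemma output_iff_head_neq: "e \<in> pg_edges H \<Longrightarrow> e \<in> output_edges H \<longleftrightarrow> pg_head H e \<noteq> h"
  using boundary_unless_h h_not_boundary pop_head_in_verts[OF pop_H] by (auto simp: output_edges_def)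

lemma noninput_is_output: "e \<in> pg_edges H \<Longrightarrow> e \<notin> input_edges H \<Longrightarrow> e \<in> output_edges H"
  using input_iff_tail_neq output_iff_head_neq pop_tail_neq_head[OF pop_H] by metis

lemma h_has_out_edge: obtains b where "b \<in> pg_edges H" "pg_tail H b = h"
  using h_vert h_not_boundary pop_source_or_sink_boundary[OF pop_H, of h]
  by (auto simp: pop_is_sink_iff[OF pop_H] has_out_edge_def)

lemma h_has_in_edge: obtains a where "a \<in> pg_edges H" "pg_head H a = h"
  using h_vert h_not_boundary pop_source_or_sink_boundary[OF pop_H, of h]
  by (auto simp: pop_is_source_iff[OF pop_H] has_in_edge_def)

end

section \<open>Cancelling a single-vertex graph composed after\<close>

locale single_after = composable H G + single_internal H h
  for H :: "('vh, 'eh) pgraph" and G :: "('vg, 'eg) pgraph" and h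
begin

lemma comp_has_out_edge_Inl: "has_out_edge (comp H G) (Inl v) \<longleftrightarrow> has_out_edge G v"
  by (force simp: has_out_edge_def comp_edges comp_tail_Inl comp_tail_Inr)

lemma comp_has_out_edge_Inr: "has_out_edge (comp H G) (Inr w) \<longleftrightarrow> w = h"
proof
  assume "has_out_edge (comp H G) (Inr w)"
  then obtain b where "b \<in> pg_edges H" "b \<notin> input_edges H" "pg_tail H b = w"
    by (auto simp: has_out_edge_def comp_edges comp_tail_Inl comp_tail_Inr)
  then show "w = h" using input_iff_tail_neq by blast
next
  assume "w = h"
  moreover obtain b where "b \<in> pg_edges H" "pg_tail H b = h" by (rule h_has_out_edge)
  ultimately show "has_out_edge (comp H G) (Inr w)"
    using input_iff_tail_neq by (force simp: has_out_edge_def comp_edges comp_tail_Inr)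
qed

lemma sink_edges_comp: "sink_edges (comp H G) =
    Inl ` {oe \<in> output_edges G. pg_head H (match_in H G oe) \<noteq> h} \<union> Inr ` (pg_edges H - input_edges H)"
  (is "_ = ?T")
proof -
  have "x \<in> sink_edges (comp H G) \<longleftrightarrow> x \<in> ?T" if x: "x \<in> pg_edges (comp H G)" for x
  proof (cases x)
    case (Inl e)
    then have e: "e \<in> pg_edges G" using x by (auto simp: comp_edges)
    have "e \<notin> output_edges G \<Longrightarrow> has_out_edge G (pg_head G e)"
      using nonoutput_has_out[OF pop_A e] unfolding has_out_edge_def by metis
    then show ?thesis
      using x Inl by (auto simp: sink_edges_def comp_head_Inl comp_has_out_edge_Inl comp_has_out_edge_Inr)
  next
    case (Inr b)
    then have b: "b \<in> pg_edges H" "b \<notin> input_edges H" using x by (auto simp: comp_edges)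
    then have "pg_head H b \<noteq> h" using noninput_is_output output_iff_head_neq by blast
    then show ?thesis
      using x Inr b by (auto simp: sink_edges_def comp_head_Inr comp_has_out_edge_Inr)
  qed
  moreover have "?T \<subseteq> pg_edges (comp H G)"
    using output_edges_subset[of G] by (auto simp: comp_edges)
  moreover have "sink_edges (comp H G) \<subseteq> pg_edges (comp H G)" by (auto simp: sink_edges_def)
  ultimately show ?thesis by (meson subset_antisym subset_iff)
qed

text \<open>Each edge of the composite ending in a sink determines the output edge of H it ends with.\<close>

definition H_output :: "'eg + 'eh \<Rightarrow> 'eh" where
  "H_output = case_sum (match_in H G) id"

lemma inj_on_H_output: "inj_on H_output (sink_edges (comp H G))"
proof (rule inj_onI)
  fix x y assume x: "x \<in> sink_edges (comp H G)" and y: "y \<in> sink_edges (comp H G)"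
    and eq: "H_output x = H_output y"
  show "x = y"
  proof (cases x; cases y)
    fix a c assume "x = Inl a" "y = Inl c"
    with x y eq show "x = y"
      using inj_onD[OF bij_betw_imp_inj_on[OF bij_betw_match_in]]
      by (auto simp: sink_edges_comp H_output_def)
  next
    fix a c assume "x = Inl a" "y = Inr c"
    with x y eq show "x = y" using match_in(1)[of a] by (auto simp: sink_edges_comp H_output_def)
  next
    fix a c assume "x = Inr a" "y = Inl c"
    with x y eq show "x = y" using match_in(1)[of c] by (auto simp: sink_edges_comp H_output_def)
  next
    fix a c assume "x = Inr a" "y = Inr c"
    with eq show "x = y" by (simp add: H_output_def)
  qed
qed

lemma image_H_output: "H_output ` sink_edges (comp H G) = output_edges H"
proof (intro equalityI subsetI)
  fix z assume "z \<in> H_output ` sink_edges (comp H G)"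
  then obtain x where x: "x \<in> sink_edges (comp H G)" "z = H_output x" by blast
  show "z \<in> output_edges H"
  proof (cases x)
    case (Inl oe)
    with x show ?thesis
      using match_in_edge output_iff_head_neq by (auto simp: sink_edges_comp H_output_def)
  next
    case (Inr b)
    with x show ?thesis using noninput_is_output by (auto simp: sink_edges_comp H_output_def)
  qed
next
  fix z assume z: "z \<in> output_edges H"
  show "z \<in> H_output ` sink_edges (comp H G)"
  proof (cases "z \<in> input_edges H")
    case True
    then obtain oe where oe: "oe \<in> output_edges G" "match_in H G oe = z"
      using bij_betw_imp_surj_on[OF bij_betw_match_in] by (metis imageE)
    then have "pg_head H (match_in H G oe) \<noteq> h"
      using z output_iff_head_neq output_edges_subset[of H] by blast
    with oe have "Inl oe \<in> sink_edges (comp H G)" by (simp add: sink_edges_comp)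
    then show ?thesis using oe(2) by (force simp: H_output_def)
  next
    case False
    then have "Inr z \<in> sink_edges (comp H G)"
      using z output_edges_subset[of H] by (auto simp: sink_edges_comp)
    then show ?thesis by (force simp: H_output_def)
  qed
qed

lemma H_output_ord_iff:
  assumes x: "x \<in> sink_edges (comp H G)" and y: "y \<in> sink_edges (comp H G)"
  shows "(H_output x, H_output y) \<in> pg_ord H \<longleftrightarrow> (x, y) \<in> pg_ord (comp H G)"
proof (cases x; cases y)
  fix a c assume xy: "x = Inl a" "y = Inl c"
  with x y have "a \<in> output_edges G" "c \<in> output_edges G" by (auto simp: sink_edges_comp)
  moreover from this have "a \<in> pg_edges G" "c \<in> pg_edges G" using output_edges_subset[of G] by blast+
  ultimately show ?thesis using xy by (simp add: H_output_def match_in_ord_iff comp_ord_Inl_Inl)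
next
  fix a c assume xy: "x = Inl a" "y = Inr c"
  with x y have "a \<in> output_edges G" "c \<in> pg_edges H" "c \<notin> input_edges H" by (auto simp: sink_edges_comp)
  then show ?thesis using xy by (simp add: H_output_def comp_ord_Inl_Inr(1))
next
  fix a c assume xy: "x = Inr a" "y = Inl c"
  with x y have "c \<in> output_edges G" "a \<in> pg_edges H" "a \<notin> input_edges H" by (auto simp: sink_edges_comp)
  then show ?thesis using xy by (simp add: H_output_def comp_ord_Inl_Inr(2))
next
  fix a c assume xy: "x = Inr a" "y = Inr c"
  with x y have "a \<in> pg_edges H - input_edges H" "c \<in> pg_edges H - input_edges H"
    by (auto simp: sink_edges_comp)
  then show ?thesis using xy by (simp add: H_output_def comp_ord_Inr_Inr)
qed

lemma rank_sink_edges_comp: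
  assumes "x \<in> sink_edges (comp H G)"
  shows "rank (pg_ord (comp H G)) (sink_edges (comp H G)) x = rank (pg_ord H) (output_edges H) (H_output x)"
  using rank_image[OF inj_on_H_output subset_refl assms] image_H_output H_output_ord_iff[OF _ assms]
  by simp

end

locale single_after_iso =
  G1: single_after H G1 h + G2: single_after H G2 h + graph_iso "comp H G1" "comp H G2" f g
  for H :: "('vh, 'eh) pgraph" and G1 :: "('v1, 'e1) pgraph" and G2 :: "('v2, 'e2) pgraph"
    and h :: 'vh and f :: "'v1 + 'vh \<Rightarrow> 'v2 + 'vh" and g :: "'e1 + 'eh \<Rightarrow> 'e2 + 'eh"
begin

lemma g_Inr:
  assumes b: "b \<in> pg_edges H" "b \<notin> input_edges H"
  shows "g (Inr b) = Inr b"
proof -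
  have b1: "Inr b \<in> sink_edges (comp H G1)" and b2: "Inr b \<in> sink_edges (comp H G2)"
    using b by (simp_all add: G1.sink_edges_comp G2.sink_edges_comp)
  have gb: "g (Inr b) \<in> sink_edges (comp H G2)" using b1 image_sink_edges by blast
  have "rank (pg_ord (comp H G2)) (sink_edges (comp H G2)) (g (Inr b)) =
      rank (pg_ord (comp H G1)) (sink_edges (comp H G1)) (Inr b)"
    using rank_image_edges[of "sink_edges (comp H G1)" "Inr b"] b1 image_sink_edges
    by (simp add: sink_edges_def)
  then have "rank (pg_ord H) (output_edges H) (G2.H_output (g (Inr b))) =
      rank (pg_ord H) (output_edges H) (G2.H_output (Inr b))"
    using G1.rank_sink_edges_comp[OF b1] G2.rank_sink_edges_comp[OF gb]
    by (simp add: G1.H_output_def G2.H_output_def)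
  then have "G2.H_output (g (Inr b)) = G2.H_output (Inr b)"
    using inj_onD[OF pop_inj_on_rank[OF G1.pop_H output_edges_subset]]
      G2.image_H_output gb b2 by blast
  then show ?thesis using inj_onD[OF G2.inj_on_H_output] gb b2 by blast
qed

lemma isl_g: "x \<in> pg_edges (comp H G1) \<Longrightarrow> isl (g x) \<longleftrightarrow> isl x"
proof (cases x)
  case (Inl e)
  assume x: "x \<in> pg_edges (comp H G1)"
  have "g x \<noteq> Inr b" if "b \<in> pg_edges H" "b \<notin> input_edges H" for b
  proof
    assume "g x = Inr b"
    then have "g x = g (Inr b)" using g_Inr[OF that] by simp
    moreover have "Inr b \<in> pg_edges (comp H G1)" using that by (simp add: comp_edges)
    ultimately show False using inj_onD[OF inj_on_edges _ x] Inl by blast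
  qed
  moreover have "g x \<in> pg_edges (comp H G2)" using bij_betw_apply[OF bij_edges x] .
  ultimately show ?thesis using Inl by (auto simp: comp_edges)
next
  case (Inr b)
  assume "x \<in> pg_edges (comp H G1)"
  with Inr show ?thesis by (auto simp: comp_edges g_Inr)
qed

definition edge_map :: "'e1 \<Rightarrow> 'e2" where
  "edge_map = projl \<circ> g \<circ> Inl"

lemma bij_betw_edge_map: "bij_betw edge_map (pg_edges G1) (pg_edges G2)"
  unfolding edge_map_def using bij_edges isl_g
  by (intro bij_betw_Inl_part) (simp_all add: comp_edges)

lemma g_Inl: "e \<in> pg_edges G1 \<Longrightarrow> g (Inl e) = Inl (edge_map e)"
  using isl_g[of "Inl e"] by (simp add: comp_edges edge_map_def)

lemma f_Inr_h: "f (Inr h) = Inr h"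
proof -
  obtain b where b: "b \<in> pg_edges H" "pg_tail H b = h" by (rule G1.h_has_out_edge)
  then have "b \<notin> input_edges H" using G1.input_iff_tail_neq by blast
  then show ?thesis
    using tail[of "Inr b"] g_Inr[of b] b by (simp add: comp_edges comp_tail_Inr)
qed

lemma isl_f: "v \<in> pg_verts (comp H G1) \<Longrightarrow> isl (f v) \<longleftrightarrow> isl v"
proof (cases v)
  case (Inl u)
  assume "v \<in> pg_verts (comp H G1)"
  with Inl have "u \<in> pg_verts G1" "\<not> is_sink G1 u" by (auto simp: comp_verts)
  then obtain e where e: "e \<in> pg_edges G1" "pg_tail G1 e = u"
    by (auto simp: pop_is_sink_iff[OF G1.pop_A] has_out_edge_def)
  then have "f v = Inl (pg_tail G2 (edge_map e))"
    using Inl tail[of "Inl e"] g_Inl[of e] by (simp add: comp_edges comp_tail_Inl)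
  with Inl show ?thesis by simp
next
  case (Inr w)
  assume v: "v \<in> pg_verts (comp H G1)"
  show ?thesis
  proof (cases "w = h")
    case True
    with Inr show ?thesis by (simp add: f_Inr_h)
  next
    case False
    then have "\<not> has_out_edge (comp H G2) (f v)"
      using Inr has_out_edge_iff[OF v] G1.comp_has_out_edge_Inr by simp
    moreover have "f v \<in> pg_verts (comp H G2)" using bij_betw_apply[OF bij_verts v] .
    ultimately have "\<not> isl (f v)"
      by (auto simp: comp_verts G2.comp_has_out_edge_Inl pop_is_sink_iff[OF G2.pop_A])
    with Inr show ?thesis by simp
  qed
qed

definition vert_map :: "'v1 \<Rightarrow> 'v2" where
  "vert_map = projl \<circ> f \<circ> Inl"

lemma bij_betw_vert_map:
  "bij_betw vert_map {v \<in> pg_verts G1. \<not> is_sink G1 v} {v \<in> pg_verts G2. \<not> is_sink G2 v}"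
  unfolding vert_map_def using bij_verts isl_f
  by (intro bij_betw_Inl_part) (simp_all add: comp_verts)

lemma f_Inl: "v \<in> pg_verts G1 \<Longrightarrow> \<not> is_sink G1 v \<Longrightarrow> f (Inl v) = Inl (vert_map v)"
  using isl_f[of "Inl v"] by (simp add: comp_verts vert_map_def)

lemma edge_map_tail:
  assumes e: "e \<in> pg_edges G1"
  shows "pg_tail G2 (edge_map e) = vert_map (pg_tail G1 e)"
proof -
  have "\<not> is_sink G1 (pg_tail G1 e)"
    using e by (auto simp: pop_is_sink_iff[OF G1.pop_A] has_out_edge_def)
  then have "f (Inl (pg_tail G1 e)) = Inl (vert_map (pg_tail G1 e))"
    using f_Inl pop_tail_in_verts[OF G1.pop_A e] by blast
  then show ?thesis using tail[of "Inl e"] g_Inl[OF e] e by (simp add: comp_edges comp_tail_Inl)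
qed

lemma edge_map_output_iff:
  assumes e: "e \<in> pg_edges G1"
  shows "edge_map e \<in> output_edges G2 \<longleftrightarrow> e \<in> output_edges G1"
proof -
  have e1: "Inl e \<in> pg_edges (comp H G1)" using e by (simp add: comp_edges)
  have "isl (pg_head (comp H G2) (Inl (edge_map e))) \<longleftrightarrow> isl (pg_head (comp H G1) (Inl e))"
    using head[OF e1] g_Inl[OF e] isl_f[OF G1.comp_head_in_verts[OF e1]] by simp
  then show ?thesis by (simp add: comp_head_Inl split: if_splits)
qed

lemma edge_map_head:
  assumes e: "e \<in> pg_edges G1" "e \<notin> output_edges G1"
  shows "pg_head G2 (edge_map e) = vert_map (pg_head G1 e)"
proof -
  have e1: "Inl e \<in> pg_edges (comp H G1)" using e by (simp add: comp_edges)
  then have "Inl (pg_head G1 e) \<in> pg_verts (comp H G1)"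
    using G1.comp_head_in_verts[OF e1] e(2) by (simp add: comp_head_Inl)
  then have "f (Inl (pg_head G1 e)) = Inl (vert_map (pg_head G1 e))"
    using f_Inl by (auto simp: comp_verts)
  moreover have "edge_map e \<notin> output_edges G2" using edge_map_output_iff e by blast
  ultimately show ?thesis using head[OF e1] g_Inl[OF e(1)] e(2) by (simp add: comp_head_Inl)
qed

lemma edge_map_ord_iff:
  assumes "a \<in> pg_edges G1" "b \<in> pg_edges G1"
  shows "(edge_map a, edge_map b) \<in> pg_ord G2 \<longleftrightarrow> (a, b) \<in> pg_ord G1"
proof -
  have "edge_map a \<in> pg_edges G2" "edge_map b \<in> pg_edges G2"
    using assms bij_betw_apply[OF bij_betw_edge_map] by blast+
  then have "(edge_map a, edge_map b) \<in> pg_ord G2 \<longleftrightarrow> (g (Inl a), g (Inl b)) \<in> pg_ord (comp H G2)"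
    using assms by (simp add: g_Inl G2.comp_ord_Inl_Inl)
  also have "\<dots> \<longleftrightarrow> (a, b) \<in> pg_ord G1"
    using assms by (simp add: ord_iff comp_edges G1.comp_ord_Inl_Inl)
  finally show ?thesis .
qed

lemma pop_iso_G1_G2: "pop_iso G1 G2"
  by (rule pop_iso_from_nonsink_map[OF G1.pop_A G2.pop_A bij_betw_edge_map edge_map_output_iff
        bij_betw_vert_map edge_map_tail edge_map_head edge_map_ord_iff])

end

section \<open>Cancelling a single-vertex graph composed before\<close>

locale single_before = composable G H + single_internal H h
  for H :: "('vh, 'eh) pgraph" and G :: "('vg, 'eg) pgraph" and h
begin

lemma comp_has_in_edge_Inl:
  "has_in_edge (comp G H) (Inl v) \<longleftrightarrow> (\<exists>a\<in>pg_edges H. a \<notin> output_edges H \<and> pg_head H a = v)"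
proof
  assume "has_in_edge (comp G H) (Inl v)"
  then show "\<exists>a\<in>pg_edges H. a \<notin> output_edges H \<and> pg_head H a = v"
    by (auto simp: has_in_edge_def comp_edges comp_head_Inl comp_head_Inr split: if_splits)
next
  assume "\<exists>a\<in>pg_edges H. a \<notin> output_edges H \<and> pg_head H a = v"
  then obtain a where "a \<in> pg_edges H" "a \<notin> output_edges H" "pg_head H a = v" by blast
  then have "Inl a \<in> pg_edges (comp G H)" "pg_head (comp G H) (Inl a) = Inl v"
    by (simp_all add: comp_edges comp_head_Inl)
  then show "has_in_edge (comp G H) (Inl v)" by (auto simp: has_in_edge_def)
qed

lemma comp_has_in_edge_Inr: "has_in_edge (comp G H) (Inr w) \<longleftrightarrow> has_in_edge G w"
proof
  assume "has_in_edge (comp G H) (Inr w)"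
  then show "has_in_edge G w"
    using match_in_edge by (auto simp: has_in_edge_def comp_edges comp_head_Inl comp_head_Inr split: if_splits)
next
  assume "has_in_edge G w"
  then obtain a where a: "a \<in> pg_edges G" "pg_head G a = w" by (auto simp: has_in_edge_def)
  show "has_in_edge (comp G H) (Inr w)"
  proof (cases "a \<in> input_edges G")
    case True
    let ?oe = "inv_into (output_edges H) (match_in G H) a"
    have "Inl ?oe \<in> pg_edges (comp G H)" "pg_head (comp G H) (Inl ?oe) = Inr w"
      using inv_match_in[OF True] a output_edges_subset[of H] by (auto simp: comp_edges comp_head_Inl)
    then show ?thesis by (auto simp: has_in_edge_def)
  next
    case False
    then have "Inr a \<in> pg_edges (comp G H)" "pg_head (comp G H) (Inr a) = Inr w"
      using a by (auto simp: comp_edges comp_head_Inr)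
    then show ?thesis by (auto simp: has_in_edge_def)
  qed
qed

lemma source_edges_comp: "source_edges (comp G H) = Inl ` input_edges H"
proof -
  have "x \<in> source_edges (comp G H) \<longleftrightarrow> x \<in> Inl ` input_edges H"
    if x: "x \<in> pg_edges (comp G H)" for x
  proof (cases x)
    case (Inl e)
    with x have e: "e \<in> pg_edges H" by (auto simp: comp_edges)
    have "has_in_edge (comp G H) (Inl (pg_tail H e)) \<longleftrightarrow> e \<notin> input_edges H"
    proof (cases "e \<in> input_edges H")
      case True
      then show ?thesis using input_edge_no_in[OF pop_H True] by (auto simp: comp_has_in_edge_Inl)
    next
      case False
      obtain a where "a \<in> pg_edges H" "pg_head H a = h" by (rule h_has_in_edge)
      then show ?thesis
        using False e input_iff_tail_neq output_iff_head_neq by (auto simp: comp_has_in_edge_Inl)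
    qed
    then show ?thesis using x Inl by (auto simp: source_edges_def comp_tail_Inl)
  next
    case (Inr b)
    with x have "b \<in> pg_edges G" "b \<notin> input_edges G" by (auto simp: comp_edges)
    then have "has_in_edge G (pg_tail G b)"
      using noninput_has_in[OF pop_B] unfolding has_in_edge_def by metis
    then show ?thesis using Inr by (auto simp: source_edges_def comp_tail_Inr comp_has_in_edge_Inr)
  qed
  moreover have "Inl ` input_edges H \<subseteq> pg_edges (comp G H)"
    using input_edges_subset[of H] by (auto simp: comp_edges)
  moreover have "source_edges (comp G H) \<subseteq> pg_edges (comp G H)" by (auto simp: source_edges_def)
  ultimately show ?thesis by (meson subset_antisym subset_iff)
qed

lemma rank_source_edges_comp:
  "i \<in> input_edges H \<Longrightarrow>
    rank (pg_ord (comp G H)) (source_edges (comp G H)) (Inl i) = rank (pg_ord H) (input_edges H) i"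
  using rank_comp_Inl[OF input_edges_subset] input_edges_subset[of H] by (auto simp: source_edges_comp)

lemma out_edges_comp_Inl:
  "{x \<in> pg_edges (comp G H). pg_tail (comp G H) x = Inl v} = Inl ` {b \<in> pg_edges H. pg_tail H b = v}"
  by (auto simp: comp_edges comp_tail_Inl comp_tail_Inr)

text \<open>An input edge of G is represented in the composite by the edge it is glued to.\<close>

definition embed :: "'eg \<Rightarrow> 'eh + 'eg" where
  "embed e = (if e \<in> input_edges G then Inl (inv_into (output_edges H) (match_in G H) e) else Inr e)"

lemma embed_in_edges: "e \<in> pg_edges G \<Longrightarrow> embed e \<in> pg_edges (comp G H)"
  using inv_match_in(1) output_edges_subset[of H] by (auto simp: embed_def comp_edges)

lemma head_embed: "e \<in> pg_edges G \<Longrightarrow> pg_head (comp G H) (embed e) = Inr (pg_head G e)"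
  using inv_match_in by (simp add: embed_def comp_head_Inl comp_head_Inr)

lemma embed_ord_iff:
  assumes a: "a \<in> pg_edges G" and b: "b \<in> pg_edges G"
  shows "(embed a, embed b) \<in> pg_ord (comp G H) \<longleftrightarrow> (a, b) \<in> pg_ord G"
proof (cases "a \<in> input_edges G"; cases "b \<in> input_edges G")
  assume "a \<in> input_edges G" "b \<in> input_edges G"
  then show ?thesis
    using inv_match_in[of a] inv_match_in[of b] match_in_ord_iff subsetD[OF output_edges_subset[of H]]
    by (metis comp_ord_Inl_Inl embed_def)
next
  assume "a \<in> input_edges G" "b \<notin> input_edges G"
  then show ?thesis using inv_match_in[of a] comp_ord_Inl_Inr(1) b by (metis embed_def)
next
  assume "a \<notin> input_edges G" "b \<in> input_edges G"
  then show ?thesis using inv_match_in[of b] comp_ord_Inl_Inr(2) a by (metis embed_def)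
next
  assume "a \<notin> input_edges G" "b \<notin> input_edges G"
  then show ?thesis using a b comp_ord_Inr_Inr by (simp add: embed_def)
qed

end

locale single_before_iso =
  G1: single_before H G1 h + G2: single_before H G2 h + graph_iso "comp G1 H" "comp G2 H" f g
  for H :: "('vh, 'eh) pgraph" and G1 :: "('v1, 'e1) pgraph" and G2 :: "('v2, 'e2) pgraph"
    and h :: 'vh and f :: "'vh + 'v1 \<Rightarrow> 'vh + 'v2" and g :: "'eh + 'e1 \<Rightarrow> 'eh + 'e2"
begin

lemma g_Inl_input:
  assumes i: "i \<in> input_edges H"
  shows "g (Inl i) = Inl i"
proof -
  have i1: "Inl i \<in> source_edges (comp G1 H)" using i by (simp add: G1.source_edges_comp)
  then have "g (Inl i) \<in> source_edges (comp G2 H)" using image_source_edges by blast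
  then obtain i' where i': "i' \<in> input_edges H" "g (Inl i) = Inl i'" by (auto simp: G2.source_edges_comp)
  have "rank (pg_ord (comp G2 H)) (source_edges (comp G2 H)) (g (Inl i)) =
      rank (pg_ord (comp G1 H)) (source_edges (comp G1 H)) (Inl i)"
    using rank_image_edges[of "source_edges (comp G1 H)" "Inl i"] i1 image_source_edges
    by (simp add: source_edges_def)
  then have "rank (pg_ord H) (input_edges H) i' = rank (pg_ord H) (input_edges H) i"
    using G1.rank_source_edges_comp[OF i] G2.rank_source_edges_comp[OF i'(1)] i'(2) by simp
  then show ?thesis
    using inj_onD[OF pop_inj_on_rank[OF G1.pop_H input_edges_subset]] i i' by blast
qed

lemma f_Inl_h: "f (Inl h) = Inl h"
proof -
  obtain a where a: "a \<in> pg_edges H" "pg_head H a = h" by (rule G1.h_has_in_edge)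
  then have "a \<in> input_edges H"
    using G1.input_iff_tail_neq pop_tail_neq_head[OF G1.pop_H] by metis
  moreover have "a \<notin> output_edges H" using a G1.output_iff_head_neq by blast
  ultimately show ?thesis
    using head[of "Inl a"] g_Inl_input a by (simp add: comp_edges comp_head_Inl)
qed

lemma g_Inl_from_h:
  assumes b: "b \<in> pg_edges H" "pg_tail H b = h"
  shows "g (Inl b) = Inl b"
proof -
  let ?B = "{b \<in> pg_edges H. pg_tail H b = h}"
  have b1: "Inl b \<in> pg_edges (comp G1 H)" using b by (simp add: comp_edges)
  then have "Inl h \<in> pg_verts (comp G1 H)"
    using G1.comp_tail_in_verts b(2) by (fastforce simp: comp_tail_Inl)
  then have image: "g ` Inl ` ?B = Inl ` ?B"
    using image_out_edges[of "Inl h"] f_Inl_h G1.out_edges_comp_Inl G2.out_edges_comp_Inl by simp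
  then obtain b' where b': "b' \<in> ?B" "g (Inl b) = Inl b'" using b by blast
  have "rank (pg_ord (comp G2 H)) (g ` Inl ` ?B) (g (Inl b)) = rank (pg_ord (comp G1 H)) (Inl ` ?B) (Inl b)"
    using rank_image_edges[of "Inl ` ?B" "Inl b"] b1 by (auto simp: comp_edges)
  then have "rank (pg_ord H) ?B b' = rank (pg_ord H) ?B b"
    using G1.rank_comp_Inl[of ?B b] G2.rank_comp_Inl[of ?B b'] b b' image by simp
  then show ?thesis
    using inj_onD[OF pop_inj_on_rank[of H ?B]] G1.pop_H b b' by auto
qed

lemma g_Inl: "b \<in> pg_edges H \<Longrightarrow> g (Inl b) = Inl b"
  using g_Inl_input g_Inl_from_h G1.input_iff_tail_neq by blast

lemma isl_g: "x \<in> pg_edges (comp G1 H) \<Longrightarrow> isl (g x) \<longleftrightarrow> isl x"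
proof (cases x)
  case (Inl b)
  assume "x \<in> pg_edges (comp G1 H)"
  with Inl show ?thesis by (auto simp: comp_edges g_Inl)
next
  case (Inr e)
  assume x: "x \<in> pg_edges (comp G1 H)"
  have "g x \<noteq> Inl b" if "b \<in> pg_edges H" for b
  proof
    assume "g x = Inl b"
    then have "g x = g (Inl b)" using g_Inl[OF that] by simp
    moreover have "Inl b \<in> pg_edges (comp G1 H)" using that by (simp add: comp_edges)
    ultimately show False using inj_onD[OF inj_on_edges _ x] Inr by blast
  qed
  moreover have "g x \<in> pg_edges (comp G2 H)" using bij_betw_apply[OF bij_edges x] .
  ultimately show ?thesis using Inr by (auto simp: comp_edges)
qed

definition noninput_map :: "'e1 \<Rightarrow> 'e2" where
  "noninput_map = projr \<circ> g \<circ> Inr"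

lemma bij_betw_noninput_map:
  "bij_betw noninput_map (pg_edges G1 - input_edges G1) (pg_edges G2 - input_edges G2)"
  unfolding noninput_map_def using bij_edges isl_g
  by (intro bij_betw_Inr_part) (simp_all add: comp_edges)

lemma g_Inr: "e \<in> pg_edges G1 \<Longrightarrow> e \<notin> input_edges G1 \<Longrightarrow> g (Inr e) = Inr (noninput_map e)"
  using isl_g[of "Inr e"] by (simp add: comp_edges noninput_map_def)

lemma f_Inl: "v \<in> pg_verts H \<Longrightarrow> \<not> is_sink H v \<Longrightarrow> f (Inl v) = Inl v"
  using tail g_Inl by (force simp: pop_is_sink_iff[OF G1.pop_H] has_out_edge_def comp_edges comp_tail_Inl)

lemma isl_f: "v \<in> pg_verts (comp G1 H) \<Longrightarrow> isl (f v) \<longleftrightarrow> isl v"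
proof (cases v)
  case (Inl u)
  assume "v \<in> pg_verts (comp G1 H)"
  with Inl show ?thesis by (auto simp: comp_verts f_Inl)
next
  case (Inr w)
  assume v: "v \<in> pg_verts (comp G1 H)"
  have "f v \<noteq> Inl u" if "u \<in> pg_verts H" "\<not> is_sink H u" for u
  proof
    assume "f v = Inl u"
    then have "f v = f (Inl u)" using f_Inl[OF that] by simp
    moreover have "Inl u \<in> pg_verts (comp G1 H)" using that by (simp add: comp_verts)
    ultimately show False using inj_onD[OF inj_on_verts _ v] Inr by blast
  qed
  moreover have "f v \<in> pg_verts (comp G2 H)" using bij_betw_apply[OF bij_verts v] .
  ultimately show ?thesis using Inr by (auto simp: comp_verts)
qed

definition vert_map :: "'v1 \<Rightarrow> 'v2" where
  "vert_map = projr \<circ> f \<circ> Inr"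

lemma bij_betw_vert_map:
  "bij_betw vert_map {v \<in> pg_verts G1. \<not> is_source G1 v} {v \<in> pg_verts G2. \<not> is_source G2 v}"
  unfolding vert_map_def using bij_verts isl_f
  by (intro bij_betw_Inr_part) (simp_all add: comp_verts)

lemma f_Inr: "w \<in> pg_verts G1 \<Longrightarrow> \<not> is_source G1 w \<Longrightarrow> f (Inr w) = Inr (vert_map w)"
  using isl_f[of "Inr w"] by (simp add: comp_verts vert_map_def)

text \<open>Input edges of G1 do not survive in the composite; they are tracked through the output
  edges of H glued to them.\<close>

definition edge_map :: "'e1 \<Rightarrow> 'e2" where
  "edge_map e = (if e \<in> input_edges G1
     then match_in G2 H (inv_into (output_edges H) (match_in G1 H) e) else noninput_map e)"

lemma bij_betw_edge_map: "bij_betw edge_map (pg_edges G1) (pg_edges G2)"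
proof -
  have inputs: "bij_betw (\<lambda>e. match_in G2 H (inv_into (output_edges H) (match_in G1 H) e))
      (input_edges G1) (input_edges G2)"
    using bij_betw_trans[OF bij_betw_inv_into[OF G1.bij_betw_match_in] G2.bij_betw_match_in]
    by (simp add: Fun.comp_def)
  have "bij_betw edge_map (input_edges G1 \<union> (pg_edges G1 - input_edges G1))
      (input_edges G2 \<union> (pg_edges G2 - input_edges G2))"
    unfolding edge_map_def[abs_def]
    by (rule bij_betw_disjoint_Un[OF inputs bij_betw_noninput_map]) auto
  moreover have "input_edges G1 \<union> (pg_edges G1 - input_edges G1) = pg_edges G1"
    "input_edges G2 \<union> (pg_edges G2 - input_edges G2) = pg_edges G2"
    using input_edges_subset[of G1] input_edges_subset[of G2] by blast+
  ultimately show ?thesis by simp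
qed

lemma edge_map_input_iff: "e \<in> pg_edges G1 \<Longrightarrow> edge_map e \<in> input_edges G2 \<longleftrightarrow> e \<in> input_edges G1"
  using G2.match_in(1) G1.inv_match_in(1) bij_betw_apply[OF bij_betw_noninput_map]
  by (auto simp: edge_map_def)

lemma g_embed:
  assumes e: "e \<in> pg_edges G1"
  shows "g (G1.embed e) = G2.embed (edge_map e)"
proof (cases "e \<in> input_edges G1")
  case True
  let ?oe = "inv_into (output_edges H) (match_in G1 H) e"
  have oe: "?oe \<in> output_edges H" by (rule G1.inv_match_in(1)[OF True])
  then have "inv_into (output_edges H) (match_in G2 H) (match_in G2 H ?oe) = ?oe"
    by (rule inv_into_f_f[OF bij_betw_imp_inj_on[OF G2.bij_betw_match_in]])
  moreover have "g (Inl ?oe) = Inl ?oe" using oe output_edges_subset[of H] g_Inl by blast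
  ultimately show ?thesis
    using True G2.match_in(1)[OF oe] by (simp add: G1.embed_def G2.embed_def edge_map_def)
next
  case False
  then show ?thesis
    using e edge_map_input_iff[OF e] g_Inr by (simp add: G1.embed_def G2.embed_def edge_map_def)
qed

lemma edge_map_head:
  assumes e: "e \<in> pg_edges G1"
  shows "pg_head G2 (edge_map e) = vert_map (pg_head G1 e)"
proof -
  have "edge_map e \<in> pg_edges G2" using bij_betw_apply[OF bij_betw_edge_map e] .
  then have "Inr (pg_head G2 (edge_map e)) = f (Inr (pg_head G1 e))"
    using head[OF G1.embed_in_edges[OF e]] g_embed[OF e] G1.head_embed[OF e] G2.head_embed by simp
  moreover have "\<not> is_source G1 (pg_head G1 e)"
    using e by (auto simp: pop_is_source_iff[OF G1.pop_B] has_in_edge_def)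
  ultimately show ?thesis using f_Inr pop_head_in_verts[OF G1.pop_B e] by simp
qed

lemma edge_map_tail:
  assumes e: "e \<in> pg_edges G1" "e \<notin> input_edges G1"
  shows "pg_tail G2 (edge_map e) = vert_map (pg_tail G1 e)"
proof -
  have "Inr (pg_tail G2 (noninput_map e)) = f (Inr (pg_tail G1 e))"
    using tail[of "Inr e"] g_Inr[OF e] e by (simp add: comp_edges comp_tail_Inr)
  moreover have "\<not> is_source G1 (pg_tail G1 e)"
    using e pop_source_or_sink_boundary[OF G1.pop_B, of "pg_tail G1 e"] by (auto simp: input_edges_def)
  ultimately show ?thesis using e f_Inr pop_tail_in_verts[OF G1.pop_B e(1)] by (simp add: edge_map_def)
qed

lemma edge_map_ord_iff:
  assumes "a \<in> pg_edges G1" "b \<in> pg_edges G1"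
  shows "(edge_map a, edge_map b) \<in> pg_ord G2 \<longleftrightarrow> (a, b) \<in> pg_ord G1"
proof -
  have "edge_map a \<in> pg_edges G2" "edge_map b \<in> pg_edges G2"
    using assms bij_betw_apply[OF bij_betw_edge_map] by blast+
  then have "(edge_map a, edge_map b) \<in> pg_ord G2 \<longleftrightarrow>
      (g (G1.embed a), g (G1.embed b)) \<in> pg_ord (comp G2 H)"
    using assms by (simp add: g_embed G2.embed_ord_iff)
  also have "\<dots> \<longleftrightarrow> (a, b) \<in> pg_ord G1"
    using assms by (simp add: ord_iff G1.embed_in_edges G1.embed_ord_iff)
  finally show ?thesis .
qed

lemma pop_iso_G1_G2: "pop_iso G1 G2"
  by (rule pop_iso_from_nonsource_map[OF G1.pop_B G2.pop_B bij_betw_edge_map edge_map_input_iff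
        bij_betw_vert_map edge_map_head edge_map_tail edge_map_ord_iff])

end

lemma pop_iso_cancel_after:
  assumes "single_after H G1 h" "single_after H G2 h" "pop_iso (comp H G1) (comp H G2)"
  shows "pop_iso G1 G2"
proof -
  interpret G1: single_after H G1 h by fact
  obtain f g where "graph_iso (comp H G1) (comp H G2) f g"
    using assms(3) G1.comp_tail_in_verts G1.comp_head_in_verts by (rule pop_iso_imp_graph_iso)
  with assms(1,2) interpret single_after_iso H G1 G2 h f g by (simp add: single_after_iso_def)
  show ?thesis by (rule pop_iso_G1_G2)
qed

lemma pop_iso_cancel_before:
  assumes "single_before H G1 h" "single_before H G2 h" "pop_iso (comp G1 H) (comp G2 H)"
  shows "pop_iso G1 G2"
proof -
  interpret G1: single_before H G1 h by fact
  obtain f g where "graph_iso (comp G1 H) (comp G2 H) f g"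
    using assms(3) G1.comp_tail_in_verts G1.comp_head_in_verts by (rule pop_iso_imp_graph_iso)
  with assms(1,2) interpret single_before_iso H G1 G2 h f g by (simp add: single_before_iso_def)
  show ?thesis by (rule pop_iso_G1_G2)
qed

theorem lemma3p6:
  fixes H :: "('vh, 'eh) pgraph" and G1 :: "('v1, 'e1) pgraph" and G2 :: "('v2, 'e2) pgraph"
  assumes "pop H" and "elementary H" and "card {v \<in> pg_verts H. internal H v} = 1"
    and "pop G1" and "pop G2"
  shows "(comp_defined H G1 \<and> comp_defined H G2 \<and> pop_iso (comp H G1) (comp H G2)
            \<longrightarrow> pop_iso G1 G2)
       \<and> (comp_defined G1 H \<and> comp_defined G2 H \<and> pop_iso (comp G1 H) (comp G2 H)
            \<longrightarrow> pop_iso G1 G2)"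
proof -
  obtain h where "{v \<in> pg_verts H. internal H v} = {h}"
    using assms(3) by (rule card_1_singletonE)
  then have "single_internal H h"
    using assms(1) by unfold_locales (auto simp: internal_def boundary_def)
  then show ?thesis
    using assms(1,4,5) pop_iso_cancel_after[of H G1 h G2] pop_iso_cancel_before[of H G1 h G2]
    by (simp add: single_after_def single_before_def composable_def comp_defined_def)
qed

end
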